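(* Let $(\mathcal{C},f,m)$ be a Floer triple over a field $\mathbb{F}$. Then the kernel of the canonical map $\kappa\colon\overline{HM}\to\underline{HM}$ is isomorphic to $\varprojlim^1_{a\to-\infty}\big(\varinjlim_{b\to\infty}HM_a^b\big)$.
   Context: A Floer triple $(\mathcal{C},f,m)$ over $\mathbb{F}$: a set $\mathcal{C}$, $f\colon\mathcal{C}\to\mathbb{R}$, $m\colon\mathcal{C}\times\mathcal{C}\to\mathbb{F}$ with (i) $\mathcal{C}_a^b=\{c: a\le f(c)\le b\}$ finite for all $a\le b$; (ii) $m(c_1,c_2)\ne0\Rightarrow f(c_1)<f(c_2)$; (iii) $\sum_{c_2}m(c_1,c_2)m(c_2,c_3)=0$ for all $c_1,c_3$. $CM_a^b$ is the $\mathbb{F}$-vector space with basis $\mathcal{C}_a^b$ (zero if $a>b$), $\partial_a^b c=\sum_{c'\in\mathcal{C}_a^b}m(c',c)c'$, $HM_a^b$ its homology. For $a_1\le a_2$, $p^b_{a_2,a_1}\colon CM^b_{a_1}\to CM^b_{a_2}$ sends $c\mapsto c$ if $f(c)\ge a_2$, else $0$; for $b_1\le b_2$, $i_a^{b_2,b_1}$ is the inclusion. $\overline{HM}=\varinjlim_b\varprojlim_a HM_a^b$ and $\underline{HM}=\varprojlim_a\varinjlim_b HM_a^b$, where inverse limits over $a$ are taken with respect to the maps induced by $p$ (compatible families) and direct limits over $b$ with respect to the maps induced by $i$; $\kappa$ sends the class of $(x_a)_a\in\varprojlim_aHM_a^b$ to $(\iota_a^bx_a)_a$ with $\iota_a^b\colon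 HM_a^b\to\varinjlim_{b'}HM_a^{b'}$ canonical. For a system $(G_a)_{a\in\mathbb{R}}$ with maps $\pi_{a_2,a_1}\colon G_{a_1}\to G_{a_2}$ ($a_1\le a_2$), choose $a_1\ge a_2\ge\dots$ with $a_j\to-\infty$ and define $\varprojlim^1G=\mathrm{coker}\,\Delta$, where $\Delta\colon\prod_jG_{a_j}\to\prod_jG_{a_j}$, $(x_j)_j\mapsto(x_j-\pi_{a_j,a_{j+1}}x_{j+1})_j$; this is independent of the chosen sequence up to canonical isomorphism. Here $G_a=\varinjlim_b HM_a^b$ with the maps induced by $Hp$. *)

theory Defs
  imports Complex_Main
begin

record ('a, 'k) vs =
  vcarr :: "'a set"
  vzero :: 'a
  vadd  :: "'a \<Rightarrow> 'a \<Rightarrow> 'a"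
  vsmul :: "'k \<Rightarrow> 'a \<Rightarrow> 'a"

definition vs_iso :: "('a, 'k) vs \<Rightarrow> ('b, 'k) vs \<Rightarrow> bool" where
  "vs_iso S T \<longleftrightarrow> (\<exists>\<phi>. bij_betw \<phi> (vcarr S) (vcarr T)
     \<and> (\<forall>x\<in>vcarr S. \<forall>y\<in>vcarr S. \<phi> (vadd S x y) = vadd T (\<phi> x) (\<phi> y))
     \<and> (\<forall>k. \<forall>x\<in>vcarr S. \<phi> (vsmul S k x) = vsmul T k (\<phi> x)))"

definition subv :: "('a, 'k) vs \<Rightarrow> 'a set \<Rightarrow> ('a, 'k) vs" where
  "subv S V = \<lparr>vcarr = vcarr S \<inter> V, vzero = vzero S, vadd = vadd S, vsmul = vsmul S\<rparr>"

definition quotv :: "('a, 'k) vs \<Rightarrow> 'a set \<Rightarrow> ('a set, 'k) vs" where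
  "quotv S W = \<lparr>vcarr = (\<lambda>x. {vadd S x w | w. w \<in> W}) ` vcarr S,
     vzero = {vadd S (vzero S) w | w. w \<in> W},
     vadd = (\<lambda>X Y. {vadd S x y | x y. x \<in> X \<and> y \<in> Y}),
     vsmul = (\<lambda>k X. {vadd S (vsmul S k x) w | x w. x \<in> X \<and> w \<in> W})\<rparr>"

definition qmap :: "('b, 'k) vs \<Rightarrow> 'b set \<Rightarrow> ('a \<Rightarrow> 'b) \<Rightarrow> 'a set \<Rightarrow> 'b set" where
  "qmap T W \<phi> X = {vadd T (\<phi> x) w | x w. x \<in> X \<and> w \<in> W}"

definition prodv :: "('i \<Rightarrow> ('a, 'k) vs) \<Rightarrow> ('i \<Rightarrow> 'a, 'k) vs" where
  "prodv S = \<lparr>vcarr = {x. \<forall>i. x i \<in> vcarr (S i)},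
     vzero = (\<lambda>i. vzero (S i)),
     vadd = (\<lambda>x y i. vadd (S i) (x i) (y i)),
     vsmul = (\<lambda>k x i. vsmul (S i) k (x i))\<rparr>"

text \<open>Inverse limit of a system indexed by the reals, with maps
  \<open>\<pi> a2 a1 : G a1 \<rightarrow> G a2\<close> for \<open>a1 \<le> a2\<close> (compatible families).\<close>
definition invlimv :: "(real \<Rightarrow> ('a, 'k) vs) \<Rightarrow> (real \<Rightarrow> real \<Rightarrow> 'a \<Rightarrow> 'a) \<Rightarrow> (real \<Rightarrow> 'a, 'k) vs" where
  "invlimv G \<pi> = subv (prodv G) {x. \<forall>a1 a2. a1 \<le> a2 \<longrightarrow> \<pi> a2 a1 (x a1) = x a2}"

text \<open>Direct limit of a system indexed by the reals, with maps
  \<open>\<iota> b2 b1 : G b1 \<rightarrow> G b2\<close> for \<open>b1 \<le> b2\<close>: equivalence classes of pairs (b, x).\<close>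
definition dircls :: "(real \<Rightarrow> ('a, 'k) vs) \<Rightarrow> (real \<Rightarrow> real \<Rightarrow> 'a \<Rightarrow> 'a) \<Rightarrow> real \<Rightarrow> 'a \<Rightarrow> (real \<times> 'a) set" where
  "dircls G \<iota> b x = {(d, v). v \<in> vcarr (G d) \<and> (\<exists>e. b \<le> e \<and> d \<le> e \<and> \<iota> e d v = \<iota> e b x)}"

definition dirlimv :: "(real \<Rightarrow> ('a, 'k) vs) \<Rightarrow> (real \<Rightarrow> real \<Rightarrow> 'a \<Rightarrow> 'a) \<Rightarrow> ((real \<times> 'a) set, 'k) vs" where
  "dirlimv G \<iota> = \<lparr>vcarr = {dircls G \<iota> b x | b x. x \<in> vcarr (G b)},
     vzero = (\<Union>b. dircls G \<iota> b (vzero (G b))),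
     vadd = (\<lambda>\<xi> \<eta>. \<Union>{dircls G \<iota> e (vadd (G e) (\<iota> e b x) (\<iota> e b' y)) | e b x b' y.
                       (b, x) \<in> \<xi> \<and> (b', y) \<in> \<eta> \<and> b \<le> e \<and> b' \<le> e}),
     vsmul = (\<lambda>k \<xi>. \<Union>{dircls G \<iota> b (vsmul (G b) k x) | b x. (b, x) \<in> \<xi>})\<rparr>"

definition dirmap :: "(real \<Rightarrow> ('b, 'k) vs) \<Rightarrow> (real \<Rightarrow> real \<Rightarrow> 'b \<Rightarrow> 'b) \<Rightarrow> (real \<Rightarrow> 'a \<Rightarrow> 'b)
    \<Rightarrow> (real \<times> 'a) set \<Rightarrow> (real \<times> 'b) set" where
  "dirmap G' \<iota>' \<psi> \<xi> = \<Union>{dircls G' \<iota>' b (\<psi> b x) | b x. (b, x) \<in> \<xi>}"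

definition floer_triple :: "'c set \<Rightarrow> ('c \<Rightarrow> real) \<Rightarrow> ('c \<Rightarrow> 'c \<Rightarrow> 'k::field) \<Rightarrow> bool" where
  "floer_triple C f m \<longleftrightarrow>
     (\<forall>a b. a \<le> b \<longrightarrow> finite {c \<in> C. a \<le> f c \<and> f c \<le> b})
   \<and> (\<forall>c1\<in>C. \<forall>c2\<in>C. m c1 c2 \<noteq> 0 \<longrightarrow> f c1 < f c2)
   \<and> (\<forall>c1\<in>C. \<forall>c3\<in>C. (\<Sum>c2 \<in> {c2 \<in> C. m c1 c2 * m c2 c3 \<noteq> 0}. m c1 c2 * m c2 c3) = 0)"

definition Cab :: "'c set \<Rightarrow> ('c \<Rightarrow> real) \<Rightarrow> real \<Rightarrow> real \<Rightarrow> 'c set" where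
  "Cab C f a b = {c \<in> C. a \<le> f c \<and> f c \<le> b}"

text \<open>Chains: finitely supported \<open>\<FF>\<close>-linear combinations of elements of \<open>C_a^b\<close>.\<close>
definition CMv :: "'c set \<Rightarrow> ('c \<Rightarrow> real) \<Rightarrow> real \<Rightarrow> real \<Rightarrow> ('c \<Rightarrow> 'k::field, 'k) vs" where
  "CMv C f a b = \<lparr>vcarr = {x. \<forall>c. x c \<noteq> 0 \<longrightarrow> c \<in> Cab C f a b},
     vzero = (\<lambda>_. 0),
     vadd = (\<lambda>x y c. x c + y c),
     vsmul = (\<lambda>k x c. k * x c)\<rparr>"

definition bd :: "'c set \<Rightarrow> ('c \<Rightarrow> real) \<Rightarrow> ('c \<Rightarrow> 'c \<Rightarrow> 'k::field) \<Rightarrow> real \<Rightarrow> real \<Rightarrow> ('c \<Rightarrow> 'k) \<Rightarrow> ('c \<Rightarrow> 'k)" where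
  "bd C f m a b x = (\<lambda>c'. if c' \<in> Cab C f a b then (\<Sum>c \<in> Cab C f a b. m c' c * x c) else 0)"

definition cycles :: "'c set \<Rightarrow> ('c \<Rightarrow> real) \<Rightarrow> ('c \<Rightarrow> 'c \<Rightarrow> 'k::field) \<Rightarrow> real \<Rightarrow> real \<Rightarrow> ('c \<Rightarrow> 'k) set" where
  "cycles C f m a b = {x \<in> vcarr (CMv C f a b). bd C f m a b x = (\<lambda>_. 0)}"

definition bdries :: "'c set \<Rightarrow> ('c \<Rightarrow> real) \<Rightarrow> ('c \<Rightarrow> 'c \<Rightarrow> 'k::field) \<Rightarrow> real \<Rightarrow> real \<Rightarrow> ('c \<Rightarrow> 'k) set" where
  "bdries C f m a b = bd C f m a b ` vcarr (CMv C f a b)"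

text \<open>Homology \<open>HM_a^b\<close>; elements are cosets \<open>z + B\<close> of cycles.\<close>
definition HMv :: "'c set \<Rightarrow> ('c \<Rightarrow> real) \<Rightarrow> ('c \<Rightarrow> 'c \<Rightarrow> 'k::field) \<Rightarrow> real \<Rightarrow> real \<Rightarrow> (('c \<Rightarrow> 'k) set, 'k) vs" where
  "HMv C f m a b = quotv (subv (CMv C f a b) (cycles C f m a b)) (bdries C f m a b)"

text \<open>The projection \<open>p^b_{a2,a1}\<close> on chains (kills generators with \<open>f c < a2\<close>).\<close>
definition pmap :: "('c \<Rightarrow> real) \<Rightarrow> real \<Rightarrow> ('c \<Rightarrow> 'k::zero) \<Rightarrow> ('c \<Rightarrow> 'k)" where
  "pmap f a2 x = (\<lambda>c. if a2 \<le> f c then x c else 0)"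

text \<open>Induced map \<open>Hp : HM_{a1}^b \<rightarrow> HM_{a2}^b\<close>.\<close>
definition Hp :: "'c set \<Rightarrow> ('c \<Rightarrow> real) \<Rightarrow> ('c \<Rightarrow> 'c \<Rightarrow> 'k::field) \<Rightarrow> real \<Rightarrow> real \<Rightarrow> real
    \<Rightarrow> ('c \<Rightarrow> 'k) set \<Rightarrow> ('c \<Rightarrow> 'k) set" where
  "Hp C f m b a2 a1 X = qmap (CMv C f a2 b) (bdries C f m a2 b) (pmap f a2) X"

text \<open>Induced map \<open>Hi : HM_a^{b1} \<rightarrow> HM_a^{b2}\<close> of the inclusion.\<close>
definition Hi :: "'c set \<Rightarrow> ('c \<Rightarrow> real) \<Rightarrow> ('c \<Rightarrow> 'c \<Rightarrow> 'k::field) \<Rightarrow> real \<Rightarrow> real \<Rightarrow> real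
    \<Rightarrow> ('c \<Rightarrow> 'k) set \<Rightarrow> ('c \<Rightarrow> 'k) set" where
  "Hi C f m a b2 b1 X = qmap (CMv C f a b2) (bdries C f m a b2) id X"

text \<open>\<open>L_b = lim_{\<leftarrow> a} HM_a^b\<close> and the maps between them induced by Hi.\<close>
definition Lsys where
  "Lsys C f m b = invlimv (\<lambda>a. HMv C f m a b) (\<lambda>a2 a1. Hp C f m b a2 a1)"

definition iotaL where
  "iotaL C f m b2 b1 x = (\<lambda>a. Hi C f m a b2 b1 (x a))"

definition overHM where
  "overHM C f m = dirlimv (Lsys C f m) (iotaL C f m)"

text \<open>\<open>G_a = lim_{\<rightarrow> b} HM_a^b\<close> with maps induced by Hp.\<close>
definition Gsys where
  "Gsys C f m a = dirlimv (\<lambda>b. HMv C f m a b) (Hi C f m a)"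

definition piG where
  "piG C f m a2 a1 \<xi> = dirmap (\<lambda>b. HMv C f m a2 b) (Hi C f m a2) (\<lambda>b x. Hp C f m b a2 a1 x) \<xi>"

definition underHM where
  "underHM C f m = invlimv (Gsys C f m) (piG C f m)"

text \<open>The canonical map \<open>\<kappa>\<close>: class of \<open>(x_a)_a\<close> at level b maps to \<open>(\<iota>_a^b x_a)_a\<close>.\<close>
definition kappa where
  "kappa C f m \<xi> = (\<lambda>a. dirmap (\<lambda>b. HMv C f m a b) (Hi C f m a) (\<lambda>b x. x a) \<xi>)"

definition kerkappa where
  "kerkappa C f m = subv (overHM C f m) {\<xi>. kappa C f m \<xi> = vzero (underHM C f m)}"

text \<open>\<open>lim^1\<close> of \<open>(G_a)\<close> computed along the sequence \<open>aseq\<close>: cokernel of \<open>\<Delta>\<close>.\<close>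
definition Delta where
  "Delta C f m aseq x = (\<lambda>j. vadd (Gsys C f m (aseq j)) (x j)
      (vsmul (Gsys C f m (aseq j)) (-1) (piG C f m (aseq j) (aseq (Suc j)) (x (Suc j)))))"

definition lim1 where
  "lim1 C f m aseq = quotv (prodv (\<lambda>j. Gsys C f m (aseq j)))
      (Delta C f m aseq ` vcarr (prodv (\<lambda>j. Gsys C f m (aseq j))))"

end

theory Submission
  imports Defs "HOL-Library.Function_Algebras"
begin

(* Both sides are parametrised by the same vector space Seqs of sequences (y_j)_j,
   where y_j is a cycle of CM_{a_j}^b for some b (the a_j decrease to -infinity):
   - Seqs maps onto lim^1 G by taking the classes of the y_j in G_{a_j};
   - Seqs maps onto ker kappa by the "connecting cycle" conn y = - sum_i D(y_i), a
     chain bounded above whose truncations are all boundaries.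
   Both maps are linear and have the same fibres, namely y ~ y' iff y - y' is, up to
   boundaries, of the form (g_j - p(g_{j+1}))_j; a general lemma on parametrised
   vector spaces (vs_iso_by_parametrization) then yields the isomorphism. *)

(* Chains on generators of C below level b; they may have infinite support. *)
definition bchains :: "'c set \<Rightarrow> ('c \<Rightarrow> real) \<Rightarrow> real \<Rightarrow> ('c \<Rightarrow> 'k::zero) set" where
  "bchains C f b = {x. \<forall>c. x c \<noteq> 0 \<longrightarrow> c \<in> C \<and> f c \<le> b}"

(* The full differential on chains bounded above: only finitely many generators in a
   window above a given level contribute, so the sum is finite. *)
definition dfull :: "'c set \<Rightarrow> ('c \<Rightarrow> real) \<Rightarrow> ('c \<Rightarrow> 'c \<Rightarrow> 'k::field) \<Rightarrow> ('c \<Rightarrow> 'k) \<Rightarrow> ('c \<Rightarrow> 'k)" where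
  "dfull C f m x = (\<lambda>c'. if c' \<in> C then (\<Sum>c\<in>{c\<in>C. x c \<noteq> 0 \<and> f c' \<le> f c}. m c' c * x c) else 0)"

lemma sum_fun_apply: "(\<Sum>i\<in>I. g i) c = (\<Sum>i\<in>I. g i c)"
  by (induction I rule: infinite_finite_induct) auto

definition hclass :: "'c set \<Rightarrow> ('c \<Rightarrow> real) \<Rightarrow> ('c \<Rightarrow> 'c \<Rightarrow> 'k::field) \<Rightarrow> real \<Rightarrow> real \<Rightarrow> ('c \<Rightarrow> 'k) \<Rightarrow> ('c \<Rightarrow> 'k) set" where
  "hclass C f m a b z = {z + w | w. w \<in> bdries C f m a b}"

lemma ex_level_raise:
  fixes b b' :: real
  assumes "\<And>e e'. P e \<Longrightarrow> e \<le> e' \<Longrightarrow> P e'"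
  shows "(\<exists>e. b \<le> e \<and> b' \<le> e \<and> P e) \<longleftrightarrow> (\<exists>e. P e)"
  using assms[of _ "max (max b b') _"] by (metis max.cobounded1 max.cobounded2 max.bounded_iff)

locale floer =
  fixes C :: "'c set" and f :: "'c \<Rightarrow> real" and m :: "'c \<Rightarrow> 'c \<Rightarrow> 'k::field"
  assumes ft: "floer_triple C f m"
begin

abbreviation "D \<equiv> dfull C f m"
abbreviation Below :: "real \<Rightarrow> ('c \<Rightarrow> 'k) set" where "Below b \<equiv> bchains C f b"
abbreviation CM :: "real \<Rightarrow> real \<Rightarrow> ('c \<Rightarrow> 'k) set" where "CM a b \<equiv> vcarr (CMv C f a b)"
abbreviation pm :: "real \<Rightarrow> ('c \<Rightarrow> 'k) \<Rightarrow> ('c \<Rightarrow> 'k)" where "pm a \<equiv> pmap f a"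

definition bdd :: "('c \<Rightarrow> 'k) \<Rightarrow> bool" where "bdd x \<longleftrightarrow> (\<exists>b. x \<in> Below b)"

lemma fin_Cab: "finite (Cab C f a b)"
proof (cases "a \<le> b")
  case True then show ?thesis using ft unfolding floer_triple_def Cab_def by blast
next
  case False then have "Cab C f a b = {}" unfolding Cab_def by auto
  then show ?thesis by simp
qed

lemma m_nz: "c1 \<in> C \<Longrightarrow> c2 \<in> C \<Longrightarrow> m c1 c2 \<noteq> 0 \<Longrightarrow> f c1 < f c2"
  using ft unfolding floer_triple_def by blast

lemma m_zero: "c1 \<in> C \<Longrightarrow> c2 \<in> C \<Longrightarrow> f c2 \<le> f c1 \<Longrightarrow> m c1 c2 = 0"
  using m_nz by force

lemma dd0: "c1 \<in> C \<Longrightarrow> c3 \<in> C \<Longrightarrow> (\<Sum>c2 \<in> {c2 \<in> C. m c1 c2 * m c2 c3 \<noteq> 0}. m c1 c2 * m c2 c3) = 0"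
  using ft unfolding floer_triple_def by blast

lemma CM_iff: "x \<in> CM a b \<longleftrightarrow> (\<forall>c. x c \<noteq> 0 \<longrightarrow> c \<in> C \<and> a \<le> f c \<and> f c \<le> b)"
  by (simp add: CMv_def Cab_def)

lemma CM_bchains: "x \<in> CM a b \<Longrightarrow> x \<in> Below b"
  by (simp add: CM_iff bchains_def)

lemma bchains_mono: "x \<in> Below b \<Longrightarrow> b \<le> b' \<Longrightarrow> x \<in> Below b'"
  by (force simp: bchains_def)

lemma CM_mono: "x \<in> CM a b \<Longrightarrow> b \<le> b' \<Longrightarrow> x \<in> CM a b'"
  by (force simp: CM_iff)

lemma CM_mono_low: "x \<in> CM a b \<Longrightarrow> a' \<le> a \<Longrightarrow> x \<in> CM a' b"
  by (force simp: CM_iff)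

lemma pm_CM: "x \<in> Below b \<Longrightarrow> pm a x \<in> CM a b"
  by (auto simp: CM_iff bchains_def pmap_def)

lemma pm_CM2: "x \<in> CM a' b \<Longrightarrow> pm a x \<in> CM a b"
  by (auto simp: CM_iff pmap_def)

lemma pm_id: "x \<in> CM a b \<Longrightarrow> pm a x = x"
  by (auto simp: CM_iff pmap_def fun_eq_iff)

lemma pm_pm: "a' \<le> a \<Longrightarrow> pm a (pm a' x) = pm a x"
  by (auto simp: pmap_def fun_eq_iff)

lemma pm_add: "pm a (x + y) = pm a x + pm a y"
  by (auto simp: pmap_def fun_eq_iff)
lemma pm_diff: "pm a (x - y) = pm a x - pm a y"
  by (auto simp: pmap_def fun_eq_iff)
lemma pm_uminus: "pm a (- x) = - pm a x"
  by (auto simp: pmap_def fun_eq_iff)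
lemma pm_zero[simp]: "pm a 0 = 0"
  by (auto simp: pmap_def fun_eq_iff)
lemma pm_smul: "pm a (\<lambda>c. k * x c) = (\<lambda>c. k * pm a x c)"
  by (auto simp: pmap_def fun_eq_iff)

lemma bchains_add: "x \<in> Below b \<Longrightarrow> y \<in> Below b \<Longrightarrow> x + y \<in> Below b"
  by (force simp: bchains_def)
lemma bchains_diff: "x \<in> Below b \<Longrightarrow> y \<in> Below b \<Longrightarrow> x - y \<in> Below b"
  by (force simp: bchains_def)
lemma bchains_smul: "x \<in> Below b \<Longrightarrow> (\<lambda>c. k * x c) \<in> Below b"
  by (force simp: bchains_def)
lemma bchains_sum: "finite I \<Longrightarrow> (\<And>i. i \<in> I \<Longrightarrow> g i \<in> Below b) \<Longrightarrow> (\<Sum>i\<in>I. g i) \<in> Below b"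
  by (induction I rule: finite_induct) (auto intro: bchains_add, force simp: bchains_def)

lemma CM_add: "x \<in> CM a b \<Longrightarrow> y \<in> CM a b \<Longrightarrow> x + y \<in> CM a b"
  by (force simp: CM_iff)
lemma CM_diff: "x \<in> CM a b \<Longrightarrow> y \<in> CM a b \<Longrightarrow> x - y \<in> CM a b"
  by (force simp: CM_iff)
lemma CM_uminus: "x \<in> CM a b \<Longrightarrow> - x \<in> CM a b"
  by (force simp: CM_iff)
lemma CM_zero[simp]: "0 \<in> CM a b"
  by (force simp: CM_iff)
lemma CM_smul: "x \<in> CM a b \<Longrightarrow> (\<lambda>c. k * x c) \<in> CM a b"
  by (force simp: CM_iff)

lemma Below_bdd: "x \<in> Below b \<Longrightarrow> bdd x"
  by (auto simp: bdd_def)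

lemma CM_bdd: "x \<in> CM a b \<Longrightarrow> bdd x"
  using CM_bchains Below_bdd by blast

lemma bdd_common: assumes "bdd x" "bdd y" obtains b where "x \<in> Below b" "y \<in> Below b"
proof -
  obtain b1 b2 where "x \<in> Below b1" "y \<in> Below b2" using assms by (auto simp: bdd_def)
  then have "x \<in> Below (max b1 b2)" "y \<in> Below (max b1 b2)" by (auto intro: bchains_mono)
  then show ?thesis using that by blast
qed

lemma bdd_add: assumes "bdd x" "bdd y" shows "bdd (x + y)"
proof -
  obtain b where "x \<in> Below b" "y \<in> Below b" using bdd_common[OF assms] .
  then show ?thesis by (intro Below_bdd bchains_add)
qed

lemma bdd_smul: "bdd x \<Longrightarrow> bdd (\<lambda>c. k * x c)"
  unfolding bdd_def using bchains_smul by blast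
lemma bdd_sum: "finite I \<Longrightarrow> (\<And>i. i \<in> I \<Longrightarrow> bdd (g i)) \<Longrightarrow> bdd (\<Sum>i\<in>I. g i)"
  by (induction I rule: finite_induct) (auto intro: bdd_add Below_bdd[of 0 0] simp: bchains_def)
lemma bdd_inC: "bdd x \<Longrightarrow> x c \<noteq> 0 \<Longrightarrow> c \<in> C"
  by (auto simp: bdd_def bchains_def)

lemma D_notC: "c' \<notin> C \<Longrightarrow> D x c' = 0"
  by (simp add: dfull_def)

lemma D_alt: assumes "x \<in> Below b" "c' \<in> C"
  shows "D x c' = (\<Sum>c\<in>Cab C f (f c') b. m c' c * x c)"
proof -
  have "{c\<in>C. x c \<noteq> 0 \<and> f c' \<le> f c} \<subseteq> Cab C f (f c') b"
    using assms(1) by (auto simp: bchains_def Cab_def)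
  then have "(\<Sum>c\<in>Cab C f (f c') b. m c' c * x c) = (\<Sum>c\<in>{c\<in>C. x c \<noteq> 0 \<and> f c' \<le> f c}. m c' c * x c)"
    by (intro sum.mono_neutral_right fin_Cab) (auto simp: Cab_def)
  then show ?thesis using assms(2) by (simp add: dfull_def)
qed

lemma D_bchains: assumes "x \<in> Below b" shows "D x \<in> Below b"
proof -
  { fix c' assume nz: "D x c' \<noteq> 0"
    then have c': "c' \<in> C" using D_notC by blast
    from nz c' have "(\<Sum>c\<in>Cab C f (f c') b. m c' c * x c) \<noteq> 0" using D_alt[OF assms c'] by simp
    then obtain c where "c \<in> Cab C f (f c') b" by (meson sum.neutral)
    then have "c' \<in> C \<and> f c' \<le> b" using c' by (auto simp: Cab_def) }
  then show ?thesis by (auto simp: bchains_def)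
qed

lemma bdd_D: "bdd x \<Longrightarrow> bdd (D x)"
  unfolding bdd_def using D_bchains by blast

lemma D_add: assumes "bdd x" "bdd y" shows "D (x + y) = D x + D y"
proof (rule ext)
  obtain b where b: "x \<in> Below b" "y \<in> Below b" using bdd_common[OF assms] .
  fix c' show "D (x + y) c' = (D x + D y) c'"
  proof (cases "c' \<in> C")
    case True
    then show ?thesis using D_alt[OF bchains_add[OF b] True] D_alt[OF b(1) True] D_alt[OF b(2) True]
      by (simp add: distrib_left sum.distrib)
  qed (simp add: D_notC)
qed

lemma D_smul: assumes "bdd x" shows "D (\<lambda>c. k * x c) = (\<lambda>c. k * D x c)"
proof (rule ext)
  obtain b where b: "x \<in> Below b" using assms by (auto simp: bdd_def)
  fix c' show "D (\<lambda>c. k * x c) c' = k * D x c'"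
  proof (cases "c' \<in> C")
    case True
    then show ?thesis using D_alt[OF bchains_smul[OF b] True] D_alt[OF b True]
      by (simp add: sum_distrib_left algebra_simps)
  qed (simp add: D_notC)
qed

lemma D_zero[simp]: "D 0 = 0"
  by (simp add: dfull_def fun_eq_iff)

lemma D_uminus: assumes "bdd x" shows "D (- x) = - D x"
  using D_smul[OF assms, of "-1"] by (simp add: fun_Compl_def)

lemma D_diff: assumes "bdd x" "bdd y" shows "D (x - y) = D x - D y"
proof -
  have "bdd (- y)" using bdd_smul[OF assms(2), of "-1"] by (simp add: fun_Compl_def)
  then show ?thesis using D_add[OF assms(1)] D_uminus[OF assms(2)] by (metis diff_conv_add_uminus)
qed

lemma D_sum: "finite I \<Longrightarrow> (\<And>i. i \<in> I \<Longrightarrow> bdd (g i)) \<Longrightarrow> D (\<Sum>i\<in>I. g i) = (\<Sum>i\<in>I. D (g i))"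
proof (induction I rule: finite_induct)
  case (insert i I)
  have "D (g i + sum g I) = D (g i) + D (sum g I)" using insert.prems by (intro D_add bdd_sum insert(1)) auto
  also have "D (sum g I) = (\<Sum>i\<in>I. D (g i))" using insert.IH insert.prems by blast
  finally show ?case by (simp only: sum.insert[OF insert(1,2)])
qed simp

(* D squares to zero on chains bounded above: near a fixed generator the computation
   only involves the finite window C_{f c}^b, where condition (iii) applies. *)
lemma DD: assumes "bdd x" shows "D (D x) = 0"
proof (rule ext)
  obtain b where b: "x \<in> Below b" using assms by (auto simp: bdd_def)
  fix c'' show "D (D x) c'' = 0 c''"
  proof (cases "c'' \<in> C")
    case True
    define A where "A = Cab C f (f c'') b"
    have finA: "finite A" unfolding A_def by (rule fin_Cab)
    have inner: "D x c' = (\<Sum>c\<in>A. m c' c * x c)" if "c' \<in> A" for c'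
    proof -
      have c': "c' \<in> C" "f c'' \<le> f c'" using that by (auto simp: A_def Cab_def)
      have "(\<Sum>c\<in>A. m c' c * x c) = (\<Sum>c\<in>Cab C f (f c') b. m c' c * x c)"
        using c' by (intro sum.mono_neutral_right finA) (auto simp: A_def Cab_def intro!: m_zero)
      then show ?thesis using D_alt[OF b c'(1)] by simp
    qed
    have window: "(\<Sum>c'\<in>A. m c'' c' * m c' c) = 0" if "c \<in> A" for c
    proof -
      have cC: "c \<in> C" and fc: "f c \<le> b" using that by (auto simp: A_def Cab_def)
      have "{c2 \<in> C. m c'' c2 * m c2 c \<noteq> 0} \<subseteq> A"
        using m_nz[OF True] m_nz[OF _ cC] fc by (force simp: A_def Cab_def)
      then have "(\<Sum>c'\<in>A. m c'' c' * m c' c) = (\<Sum>c2 \<in> {c2 \<in> C. m c'' c2 * m c2 c \<noteq> 0}. m c'' c2 * m c2 c)"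
        by (intro sum.mono_neutral_right finA) (auto simp: A_def Cab_def)
      then show ?thesis using dd0[OF True cC] by simp
    qed
    have "D (D x) c'' = (\<Sum>c'\<in>A. m c'' c' * D x c')"
      using D_alt[OF D_bchains[OF b] True] by (simp add: A_def)
    also have "\<dots> = (\<Sum>c'\<in>A. \<Sum>c\<in>A. m c'' c' * (m c' c * x c))"
      by (intro sum.cong refl) (simp add: inner sum_distrib_left)
    also have "\<dots> = (\<Sum>c\<in>A. x c * (\<Sum>c'\<in>A. m c'' c' * m c' c))"
      by (subst sum.swap) (simp add: sum_distrib_left algebra_simps)
    also have "\<dots> = 0"
      by (simp add: window)
    finally show ?thesis by simp
  qed (simp add: D_notC)
qed

(* D commutes with truncation up to truncation: the part of x below a does not
   contribute to D x above a. *)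
lemma D_pm: assumes "bdd x" shows "pm a (D (pm a x)) = pm a (D x)"
proof (rule ext)
  obtain b where b: "x \<in> Below b" using assms by (auto simp: bdd_def)
  fix c' show "pm a (D (pm a x)) c' = pm a (D x) c'"
  proof (cases "c' \<in> C \<and> a \<le> f c'")
    case True
    have px: "pm a x \<in> Below b" using b by (auto simp: bchains_def pmap_def)
    have "(\<Sum>c\<in>Cab C f (f c') b. m c' c * pm a x c) = (\<Sum>c\<in>Cab C f (f c') b. m c' c * x c)"
      using True by (intro sum.cong refl) (auto simp: Cab_def pmap_def)
    then show ?thesis using True D_alt[OF b] D_alt[OF px] by (simp add: pmap_def)
  qed (auto simp: pmap_def D_notC)
qed

lemma D_pm_at: assumes "bdd x" "a \<le> f c'" shows "D (pm a x) c' = D x c'"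
  using fun_cong[OF D_pm[OF assms(1), of a], of c'] assms(2) by (simp add: pmap_def)

lemma bd_eq: assumes "x \<in> CM a b" shows "bd C f m a b x = pm a (D x)"
proof (rule ext)
  fix c' show "bd C f m a b x c' = pm a (D x) c'"
  proof (cases "c' \<in> Cab C f a b")
    case True
    then have c': "c' \<in> C" "a \<le> f c'" "f c' \<le> b" by (auto simp: Cab_def)
    have "(\<Sum>c\<in>Cab C f a b. m c' c * x c) = (\<Sum>c\<in>Cab C f (f c') b. m c' c * x c)"
      using c' by (intro sum.mono_neutral_right fin_Cab) (auto simp: Cab_def intro!: m_zero)
    then show ?thesis using True c' D_alt[OF CM_bchains[OF assms] c'(1)] by (simp add: bd_def pmap_def)
  next
    case False
    have "D x c' = 0" if "c' \<in> C" "a \<le> f c'"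
    proof -
      from False that have "Cab C f (f c') b = {}" by (auto simp: Cab_def)
      then show ?thesis using D_alt[OF CM_bchains[OF assms] that(1)] by simp
    qed
    then show ?thesis using False D_notC[of c' x] by (auto simp: bd_def pmap_def)
  qed
qed

lemma cycles_iff: "x \<in> cycles C f m a b \<longleftrightarrow> x \<in> CM a b \<and> pm a (D x) = 0"
  by (auto simp: cycles_def bd_eq)

lemma bdries_iff: "y \<in> bdries C f m a b \<longleftrightarrow> (\<exists>x\<in>CM a b. y = pm a (D x))"
  by (auto simp: bdries_def bd_eq)

lemma bdries_CM: "y \<in> bdries C f m a b \<Longrightarrow> y \<in> CM a b"
  by (auto simp: bdries_iff intro!: pm_CM[OF D_bchains[OF CM_bchains]])

lemma bdries_cycles: "y \<in> bdries C f m a b \<Longrightarrow> y \<in> cycles C f m a b"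
proof -
  assume "y \<in> bdries C f m a b"
  then obtain x where x: "x \<in> CM a b" "y = pm a (D x)" by (auto simp: bdries_iff)
  have "pm a (D y) = pm a (D (D x))" using x D_pm[OF bdd_D[OF CM_bdd[OF x(1)]]] by simp
  then show ?thesis using bdries_CM[OF \<open>y \<in> _\<close>] DD[OF CM_bdd[OF x(1)]] by (simp add: cycles_iff)
qed

lemma trunc_bdry_of_lifts:
  assumes lifts: "\<And>j. \<exists>v \<in> Below E. pm (s j) X = pm (s j) (D v)" and unb: "\<exists>j. s j \<le> a"
  shows "pm a X \<in> bdries C f m a E"
proof -
  obtain j where j: "s j \<le> a" using unb by blast
  obtain v where v: "v \<in> Below E" "pm (s j) X = pm (s j) (D v)" using lifts by blast
  have "pm a X = pm a (pm (s j) X)" using pm_pm[OF j] by simp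
  also have "\<dots> = pm a (D v)" using v(2) pm_pm[OF j] by simp
  also have "\<dots> = pm a (D (pm a v))" using D_pm[OF Below_bdd[OF v(1)]] by simp
  finally show ?thesis using pm_CM[OF v(1)] by (auto simp: bdries_iff)
qed

abbreviation "B a b \<equiv> bdries C f m a b"
abbreviation "Z a b \<equiv> cycles C f m a b"
abbreviation "hc a b \<equiv> hclass C f m a b"

lemma B_zero: "0 \<in> B a b"
  using bdries_iff[of 0 a b] CM_zero by (metis D_zero pm_zero)

lemma B_add: assumes "x \<in> B a b" "y \<in> B a b" shows "x + y \<in> B a b"
proof -
  obtain u v where u: "u \<in> CM a b" "x = pm a (D u)" and v: "v \<in> CM a b" "y = pm a (D v)"
    using assms by (auto simp: bdries_iff)
  have "x + y = pm a (D (u + v))" using u v D_add[OF CM_bdd[OF u(1)] CM_bdd[OF v(1)]] by (simp add: pm_add)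
  then show ?thesis using CM_add[OF u(1) v(1)] by (auto simp: bdries_iff)
qed

lemma B_smul: assumes "x \<in> B a b" shows "(\<lambda>c. k * x c) \<in> B a b"
proof -
  obtain u where u: "u \<in> CM a b" "x = pm a (D u)" using assms by (auto simp: bdries_iff)
  have "(\<lambda>c. k * x c) = pm a (D (\<lambda>c. k * u c))" using u D_smul[OF CM_bdd[OF u(1)]] by (simp add: pm_smul)
  then show ?thesis using CM_smul[OF u(1)] by (auto simp: bdries_iff)
qed

lemma B_uminus: assumes "x \<in> B a b" shows "- x \<in> B a b"
  using B_smul[OF assms, of "-1"] by (simp add: fun_Compl_def)

lemma B_uminus_iff: "- x \<in> B a b \<longleftrightarrow> x \<in> B a b"
  using B_uminus[of "- x"] B_uminus[of x] by auto

lemma B_diff: "x \<in> B a b \<Longrightarrow> y \<in> B a b \<Longrightarrow> x - y \<in> B a b"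
  using B_add[OF _ B_uminus] by (metis diff_conv_add_uminus)

lemma B_mono: "x \<in> B a b \<Longrightarrow> b \<le> b' \<Longrightarrow> x \<in> B a b'"
  by (auto simp: bdries_iff intro: CM_mono)

lemma B_pm: assumes "x \<in> B a b" "a \<le> a'" shows "pm a' x \<in> B a' b"
proof -
  obtain u where u: "u \<in> CM a b" "x = pm a (D u)" using assms by (auto simp: bdries_iff)
  have "pm a' x = pm a' (D u)" using u assms(2) by (simp add: pm_pm)
  also have "\<dots> = pm a' (D (pm a' u))" using D_pm[OF CM_bdd[OF u(1)]] by simp
  finally show ?thesis using pm_CM2[OF u(1)] by (auto simp: bdries_iff)
qed

lemma Z_add: "x \<in> Z a b \<Longrightarrow> y \<in> Z a b \<Longrightarrow> x + y \<in> Z a b"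
  by (auto simp: cycles_iff CM_add D_add[OF CM_bdd CM_bdd] pm_add)
lemma Z_smul: "x \<in> Z a b \<Longrightarrow> (\<lambda>c. k * x c) \<in> Z a b"
  by (auto simp: cycles_iff CM_smul D_smul[OF CM_bdd] pm_smul fun_eq_iff)
lemma Z_uminus: "x \<in> Z a b \<Longrightarrow> - x \<in> Z a b"
  by (auto simp: cycles_iff CM_uminus D_uminus[OF CM_bdd] pm_uminus)
lemma Z_diff: "x \<in> Z a b \<Longrightarrow> y \<in> Z a b \<Longrightarrow> x - y \<in> Z a b"
  using Z_add[OF _ Z_uminus] by (metis diff_conv_add_uminus)
lemma Z_zero: "0 \<in> Z a b"
  by (auto simp: cycles_iff)
lemma Z_mono: "x \<in> Z a b \<Longrightarrow> b \<le> b' \<Longrightarrow> x \<in> Z a b'"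
  by (auto simp: cycles_iff intro: CM_mono)
lemma Z_pm: assumes "x \<in> Z a b" "a \<le> a'" shows "pm a' x \<in> Z a' b"
proof -
  have "pm a' (D (pm a' x)) = pm a' (D x)" using D_pm[OF CM_bdd] assms by (auto simp: cycles_iff)
  also have "\<dots> = pm a' (pm a (D x))" using assms(2) by (simp add: pm_pm)
  also have "\<dots> = 0" using assms by (simp add: cycles_iff)
  finally show ?thesis using assms pm_CM2 by (auto simp: cycles_iff)
qed

lemma hc_self: "z \<in> hc a b z"
  unfolding hclass_def using B_zero by force

lemma hc_eq: "hc a b z = hc a b z' \<longleftrightarrow> z - z' \<in> B a b"
proof
  assume "hc a b z = hc a b z'"
  then have "z \<in> hc a b z'" using hc_self[of z a b] by simp
  then obtain w where "w \<in> B a b" "z = z' + w" unfolding hclass_def by auto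
  then show "z - z' \<in> B a b" by simp
next
  assume h: "z - z' \<in> B a b"
  show "hc a b z = hc a b z'"
  proof (intro equalityI subsetI)
    fix x assume "x \<in> hc a b z"
    then obtain w where w: "w \<in> B a b" "x = z + w" unfolding hclass_def by auto
    then have "x = z' + ((z - z') + w)" by simp
    then show "x \<in> hc a b z'" unfolding hclass_def using B_add[OF h w(1)] by blast
  next
    fix x assume "x \<in> hc a b z'"
    then obtain w where w: "w \<in> B a b" "x = z' + w" unfolding hclass_def by auto
    then have "x = z + (w - (z - z'))" by simp
    then show "x \<in> hc a b z" unfolding hclass_def using B_diff[OF w(1) h] by blast
  qed
qed

lemma HM_carr: "vcarr (HMv C f m a b) = hc a b ` Z a b"
proof -
  have "vcarr (HMv C f m a b) = (\<lambda>x. {(\<lambda>c. x c + w c) | w. w \<in> B a b}) ` (CM a b \<inter> Z a b)"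
    by (simp add: HMv_def quotv_def subv_def CMv_def)
  also have "\<dots> = hc a b ` Z a b"
    by (auto simp: hclass_def plus_fun_def cycles_iff image_def)
  finally show ?thesis .
qed

lemma HM_zero: "vzero (HMv C f m a b) = hc a b 0"
  by (simp add: HMv_def quotv_def subv_def CMv_def hclass_def plus_fun_def)

lemma HM_add: "vadd (HMv C f m a b) (hc a b z) (hc a b z') = hc a b (z + z')"
proof -
  have "vadd (HMv C f m a b) (hc a b z) (hc a b z') = {(\<lambda>c. x c + y c) | x y. x \<in> hc a b z \<and> y \<in> hc a b z'}"
    by (simp add: HMv_def quotv_def subv_def CMv_def)
  also have "\<dots> = hc a b (z + z')"
  proof (intro equalityI subsetI)
    fix u assume "u \<in> {(\<lambda>c. x c + y c) | x y. x \<in> hc a b z \<and> y \<in> hc a b z'}"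
    then obtain w w' where "w \<in> B a b" "w' \<in> B a b" "u = (z + w) + (z' + w')"
      unfolding hclass_def plus_fun_def by auto
    then have "u = (z + z') + (w + w')" by (simp add: algebra_simps)
    then show "u \<in> hc a b (z + z')" unfolding hclass_def using B_add[OF \<open>w \<in> B a b\<close> \<open>w' \<in> B a b\<close>] by blast
  next
    fix u assume "u \<in> hc a b (z + z')"
    then obtain w where "w \<in> B a b" "u = (z + z') + w" unfolding hclass_def by auto
    then have "u = (\<lambda>c. (z + w) c + z' c)" by (auto simp: fun_eq_iff algebra_simps)
    moreover have "z + w \<in> hc a b z" using \<open>w \<in> B a b\<close> unfolding hclass_def by auto
    ultimately show "u \<in> {(\<lambda>c. x c + y c) | x y. x \<in> hc a b z \<and> y \<in> hc a b z'}"
      using hc_self by blast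
  qed
  finally show ?thesis .
qed

(* The sum of a coset z + B with the image of another one under an additive map that
   respects boundaries is again a coset; this describes all the induced maps below. *)
lemma hc_image:
  assumes B: "\<And>w. w \<in> B a b \<Longrightarrow> \<phi> w \<in> B a' b'" and add: "\<And>x y. \<phi> (x + y) = \<phi> x + \<phi> y"
  shows "{(\<lambda>c. \<phi> x c + w c) | x w. x \<in> hc a b z \<and> w \<in> B a' b'} = hc a' b' (\<phi> z)"
proof (intro equalityI subsetI)
  fix u assume "u \<in> {(\<lambda>c. \<phi> x c + w c) | x w. x \<in> hc a b z \<and> w \<in> B a' b'}"
  then obtain w w' where w: "w \<in> B a b" "w' \<in> B a' b'" and u: "u = \<phi> (z + w) + w'"
    unfolding hclass_def plus_fun_def by auto
  then have "u = \<phi> z + (\<phi> w + w')" by (simp add: add add.assoc)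
  then show "u \<in> hc a' b' (\<phi> z)" unfolding hclass_def using B_add[OF B[OF w(1)] w(2)] by blast
next
  fix u assume "u \<in> hc a' b' (\<phi> z)"
  then obtain w where "w \<in> B a' b'" "u = (\<lambda>c. \<phi> z c + w c)" unfolding hclass_def plus_fun_def by auto
  then show "u \<in> {(\<lambda>c. \<phi> x c + w c) | x w. x \<in> hc a b z \<and> w \<in> B a' b'}"
    using hc_self by blast
qed

lemma HM_smul: "vsmul (HMv C f m a b) k (hc a b z) = hc a b (\<lambda>c. k * z c)"
  using hc_image[of a b "\<lambda>x c. k * x c" a b z] B_smul
  by (simp add: HMv_def quotv_def subv_def CMv_def distrib_left plus_fun_def)

lemma Hi_hc: assumes "b1 \<le> b2" shows "Hi C f m a b2 b1 (hc a b1 z) = hc a b2 z"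
  using hc_image[of a b1 id a b2 z] B_mono[OF _ assms] by (simp add: Hi_def qmap_def CMv_def)

lemma Hp_hc: assumes "a1 \<le> a2" shows "Hp C f m b a2 a1 (hc a1 b z) = hc a2 b (pm a2 z)"
  using hc_image[of a1 b "pm a2" a2 b z] B_pm[OF _ assms] pm_add by (simp add: Hp_def qmap_def CMv_def)

end

lemma common_parametrization_bij:
  assumes im: "\<phi> ` P = A" "\<phi>' ` P = A'"
    and fib: "\<And>x y. x \<in> P \<Longrightarrow> y \<in> P \<Longrightarrow> \<phi> x = \<phi> y \<longleftrightarrow> \<phi>' x = \<phi>' y"
  obtains \<psi> where "bij_betw \<psi> A A'" "\<And>x. x \<in> P \<Longrightarrow> \<psi> (\<phi> x) = \<phi>' x"
proof -
  define \<psi> where "\<psi> s = \<phi>' (inv_into P \<phi> s)" for s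
  have pre: "inv_into P \<phi> s \<in> P" "\<phi> (inv_into P \<phi> s) = s" if "s \<in> A" for s
  proof -
    have s: "s \<in> \<phi> ` P" using that im(1) by simp
    show "inv_into P \<phi> s \<in> P" using inv_into_into[OF s] .
    show "\<phi> (inv_into P \<phi> s) = s" using f_inv_into_f[OF s] .
  qed
  have psi: "\<psi> (\<phi> x) = \<phi>' x" if "x \<in> P" for x
  proof -
    have s: "\<phi> x \<in> A" using that im(1) by blast
    show ?thesis unfolding \<psi>_def using iffD1[OF fib[OF pre(1)[OF s] that] pre(2)[OF s]] .
  qed
  have "inj_on \<psi> A"
  proof
    fix s s' assume s: "s \<in> A" and s': "s' \<in> A" and eq: "\<psi> s = \<psi> s'"
    have "\<phi>' (inv_into P \<phi> s) = \<phi>' (inv_into P \<phi> s')" using eq unfolding \<psi>_def .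
    then have "\<phi> (inv_into P \<phi> s) = \<phi> (inv_into P \<phi> s')"
      by (rule iffD2[OF fib[OF pre(1)[OF s] pre(1)[OF s']]])
    then show "s = s'" using pre(2)[OF s] pre(2)[OF s'] by simp
  qed
  moreover have "\<psi> ` A = A'"
  proof
    show "\<psi> ` A \<subseteq> A'"
    proof
      fix t assume "t \<in> \<psi> ` A"
      then obtain s where s: "s \<in> A" "t = \<psi> s" by blast
      have "\<phi>' (inv_into P \<phi> s) \<in> \<phi>' ` P" by (rule imageI[OF pre(1)[OF s(1)]])
      then show "t \<in> A'" unfolding s(2) \<psi>_def im(2) .
    qed
    show "A' \<subseteq> \<psi> ` A"
    proof
      fix t assume "t \<in> A'"
      then obtain x where x: "x \<in> P" "t = \<phi>' x" using im(2) by blast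
      moreover have "\<phi> x \<in> A" using im(1) x(1) by blast
      ultimately show "t \<in> \<psi> ` A" using psi[OF x(1)] by (metis image_eqI)
    qed
  qed
  ultimately have "bij_betw \<psi> A A'" by (rule bij_betw_imageI)
  then show ?thesis using that psi by blast
qed

lemma vs_iso_by_parametrization:
  fixes \<phi>a :: "'p \<Rightarrow> 'a" and \<phi>b :: "'p \<Rightarrow> 'b" and S :: "('a, 'k) vs" and T :: "('b, 'k) vs"
    and pl :: "'p \<Rightarrow> 'p \<Rightarrow> 'p" and sm :: "'k \<Rightarrow> 'p \<Rightarrow> 'p"
  assumes im1: "\<phi>a ` P = vcarr S" and im2: "\<phi>b ` P = vcarr T"
    and pl: "\<And>x y. x \<in> P \<Longrightarrow> y \<in> P \<Longrightarrow> pl x y \<in> P"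
    and sm: "\<And>k x. x \<in> P \<Longrightarrow> sm k x \<in> P"
    and add1: "\<And>x y. x \<in> P \<Longrightarrow> y \<in> P \<Longrightarrow> vadd S (\<phi>a x) (\<phi>a y) = \<phi>a (pl x y)"
    and add2: "\<And>x y. x \<in> P \<Longrightarrow> y \<in> P \<Longrightarrow> vadd T (\<phi>b x) (\<phi>b y) = \<phi>b (pl x y)"
    and sm1: "\<And>k x. x \<in> P \<Longrightarrow> vsmul S k (\<phi>a x) = \<phi>a (sm k x)"
    and sm2: "\<And>k x. x \<in> P \<Longrightarrow> vsmul T k (\<phi>b x) = \<phi>b (sm k x)"
    and fib: "\<And>x y. x \<in> P \<Longrightarrow> y \<in> P \<Longrightarrow> \<phi>a x = \<phi>a y \<longleftrightarrow> \<phi>b x = \<phi>b y"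
  shows "vs_iso S T"
proof -
  obtain \<psi> where bij: "bij_betw \<psi> (vcarr S) (vcarr T)" and psi: "\<And>x. x \<in> P \<Longrightarrow> \<psi> (\<phi>a x) = \<phi>b x"
    using common_parametrization_bij[OF im1 im2 fib] by blast
  have "\<psi> (vadd S s s') = vadd T (\<psi> s) (\<psi> s')" if "s \<in> vcarr S" "s' \<in> vcarr S" for s s'
  proof -
    have "s \<in> \<phi>a ` P" "s' \<in> \<phi>a ` P" using that unfolding im1 .
    then obtain x x' where x: "x \<in> P" "s = \<phi>a x" and x': "x' \<in> P" "s' = \<phi>a x'" by blast
    show ?thesis
      unfolding x(2) x'(2) add1[OF x(1) x'(1)] psi[OF pl[OF x(1) x'(1)]] psi[OF x(1)] psi[OF x'(1)]
        add2[OF x(1) x'(1)] ..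
  qed
  moreover have "\<psi> (vsmul S k s) = vsmul T k (\<psi> s)" if "s \<in> vcarr S" for k s
  proof -
    have "s \<in> \<phi>a ` P" using that unfolding im1 .
    then obtain x where x: "x \<in> P" "s = \<phi>a x" by blast
    show ?thesis unfolding x(2) sm1[OF x(1)] psi[OF sm[OF x(1)]] psi[OF x(1)] sm2[OF x(1)] ..
  qed
  ultimately show ?thesis unfolding vs_iso_def using bij by blast
qed

(* The operations of a direct limit are unions over all representatives; such a union is
   evaluated by showing that every member is the same class. *)
lemma union_const: "S \<noteq> {} \<Longrightarrow> (\<And>X. X \<in> S \<Longrightarrow> X = A) \<Longrightarrow> \<Union>S = A"
  by auto

locale dsys =
  fixes G :: "real \<Rightarrow> ('a, 'k) vs" and \<iota> :: "real \<Rightarrow> real \<Rightarrow> 'a \<Rightarrow> 'a"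
  assumes i_carr: "b \<le> e \<Longrightarrow> x \<in> vcarr (G b) \<Longrightarrow> \<iota> e b x \<in> vcarr (G e)"
  and i_id: "x \<in> vcarr (G b) \<Longrightarrow> \<iota> b b x = x"
  and i_comp: "b \<le> d \<Longrightarrow> d \<le> e \<Longrightarrow> x \<in> vcarr (G b) \<Longrightarrow> \<iota> e d (\<iota> d b x) = \<iota> e b x"
  and add_carr: "x \<in> vcarr (G b) \<Longrightarrow> y \<in> vcarr (G b) \<Longrightarrow> vadd (G b) x y \<in> vcarr (G b)"
  and smul_carr: "x \<in> vcarr (G b) \<Longrightarrow> vsmul (G b) k x \<in> vcarr (G b)"
  and zero_carr: "vzero (G b) \<in> vcarr (G b)"
  and i_add: "b \<le> e \<Longrightarrow> x \<in> vcarr (G b) \<Longrightarrow> y \<in> vcarr (G b) \<Longrightarrow>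
      \<iota> e b (vadd (G b) x y) = vadd (G e) (\<iota> e b x) (\<iota> e b y)"
  and i_smul: "b \<le> e \<Longrightarrow> x \<in> vcarr (G b) \<Longrightarrow> \<iota> e b (vsmul (G b) k x) = vsmul (G e) k (\<iota> e b x)"
  and i_zero: "b \<le> e \<Longrightarrow> \<iota> e b (vzero (G b)) = vzero (G e)"
begin

abbreviation "dc \<equiv> dircls G \<iota>"

lemma dc_self: "x \<in> vcarr (G b) \<Longrightarrow> (b, x) \<in> dc b x"
  unfolding dircls_def by auto

(* Equalities after transport persist under further transport; hence the relation
   defining the classes is transitive. *)
lemma push: assumes "e \<le> e'" "d \<le> e" "b \<le> e" "v \<in> vcarr (G d)" "x \<in> vcarr (G b)" "\<iota> e d v = \<iota> e b x"
  shows "\<iota> e' d v = \<iota> e' b x"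
  using i_comp[OF assms(2,1,4)] i_comp[OF assms(3,1,5)] assms(6) by metis

lemma rel_trans:
  assumes x: "x \<in> vcarr (G b)" and v: "v \<in> vcarr (G d)" and u: "u \<in> vcarr (G d')"
    and e1: "b \<le> e1" "d \<le> e1" "\<iota> e1 d v = \<iota> e1 b x"
    and e2: "d \<le> e2" "d' \<le> e2" "\<iota> e2 d' u = \<iota> e2 d v"
  shows "\<exists>e. b \<le> e \<and> d' \<le> e \<and> \<iota> e d' u = \<iota> e b x"
proof -
  let ?e = "max e1 e2"
  have "\<iota> ?e d v = \<iota> ?e b x" using push[OF _ e1(2,1) v x e1(3)] by simp
  moreover have "\<iota> ?e d' u = \<iota> ?e d v" using push[OF _ e2(2,1) u v e2(3)] by simp
  ultimately show ?thesis using e1 e2 by (intro exI[of _ ?e]) auto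
qed

lemma dc_mem_eq: assumes x: "x \<in> vcarr (G b)" and mem: "(d, v) \<in> dc b x"
  shows "dc d v = dc b x"
proof -
  from mem obtain e where v: "v \<in> vcarr (G d)" and e: "b \<le> e" "d \<le> e" "\<iota> e d v = \<iota> e b x"
    unfolding dircls_def by auto
  show ?thesis
  proof (intro equalityI subsetI)
    fix q assume "q \<in> dc d v"
    then obtain d' u e' where q: "q = (d', u)" "u \<in> vcarr (G d')" "d \<le> e'" "d' \<le> e'" "\<iota> e' d' u = \<iota> e' d v"
      unfolding dircls_def by auto
    from rel_trans[OF x v q(2) e q(3-5)] show "q \<in> dc b x" using q unfolding dircls_def by auto
  next
    fix q assume "q \<in> dc b x"
    then obtain d' u e' where q: "q = (d', u)" "u \<in> vcarr (G d')" "b \<le> e'" "d' \<le> e'" "\<iota> e' d' u = \<iota> e' b x"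
      unfolding dircls_def by auto
    have e_sym: "d \<le> e" "b \<le> e" "\<iota> e b x = \<iota> e d v" using e by auto
    from rel_trans[OF v x q(2) e_sym q(3-5)] show "q \<in> dc d v" using q unfolding dircls_def by auto
  qed
qed

lemma dc_eq_iff: assumes x: "x \<in> vcarr (G b)" and y: "y \<in> vcarr (G b')"
  shows "dc b' y = dc b x \<longleftrightarrow> (\<exists>e. b \<le> e \<and> b' \<le> e \<and> \<iota> e b' y = \<iota> e b x)"
proof
  assume "dc b' y = dc b x"
  then have "(b', y) \<in> dc b x" using dc_self[OF y] by simp
  then show "\<exists>e. b \<le> e \<and> b' \<le> e \<and> \<iota> e b' y = \<iota> e b x" unfolding dircls_def by auto
next
  assume "\<exists>e. b \<le> e \<and> b' \<le> e \<and> \<iota> e b' y = \<iota> e b x"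
  then have "(b', y) \<in> dc b x" using y unfolding dircls_def by auto
  then show "dc b' y = dc b x" by (rule dc_mem_eq[OF x])
qed

lemma dc_push: assumes x: "x \<in> vcarr (G b)" and "b \<le> e" shows "dc e (\<iota> e b x) = dc b x"
  using dc_eq_iff[OF x i_carr[OF assms(2) x]] assms i_comp[OF assms(2) order_refl x] by auto

lemma carr_dl: "vcarr (dirlimv G \<iota>) = {dc b x | b x. x \<in> vcarr (G b)}"
  by (simp add: dirlimv_def)

lemma add_dl: assumes x: "x \<in> vcarr (G b)" and y: "y \<in> vcarr (G b')" and e: "b \<le> e" "b' \<le> e"
  shows "vadd (dirlimv G \<iota>) (dc b x) (dc b' y) = dc e (vadd (G e) (\<iota> e b x) (\<iota> e b' y))"
proof -
  have "vadd (dirlimv G \<iota>) (dc b x) (dc b' y) = \<Union>{dc e1 (vadd (G e1) (\<iota> e1 b1 x1) (\<iota> e1 b2 y1)) | e1 b1 x1 b2 y1.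
        (b1, x1) \<in> dc b x \<and> (b2, y1) \<in> dc b' y \<and> b1 \<le> e1 \<and> b2 \<le> e1}"
    by (simp add: dirlimv_def)
  also have "\<dots> = dc e (vadd (G e) (\<iota> e b x) (\<iota> e b' y))"
  proof (rule union_const)
    show "{dc e1 (vadd (G e1) (\<iota> e1 b1 x1) (\<iota> e1 b2 y1)) | e1 b1 x1 b2 y1.
        (b1, x1) \<in> dc b x \<and> (b2, y1) \<in> dc b' y \<and> b1 \<le> e1 \<and> b2 \<le> e1} \<noteq> {}"
      using dc_self[OF x] dc_self[OF y] e by blast
  next
    fix X assume "X \<in> {dc e1 (vadd (G e1) (\<iota> e1 b1 x1) (\<iota> e1 b2 y1)) | e1 b1 x1 b2 y1.
        (b1, x1) \<in> dc b x \<and> (b2, y1) \<in> dc b' y \<and> b1 \<le> e1 \<and> b2 \<le> e1}"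
    then obtain e1 b1 x1 b2 y1 where X: "X = dc e1 (vadd (G e1) (\<iota> e1 b1 x1) (\<iota> e1 b2 y1))"
      and m1: "(b1, x1) \<in> dc b x" and m2: "(b2, y1) \<in> dc b' y" and le: "b1 \<le> e1" "b2 \<le> e1" by blast
    from m1 obtain f1 where x1: "x1 \<in> vcarr (G b1)" and f1: "b \<le> f1" "b1 \<le> f1" "\<iota> f1 b1 x1 = \<iota> f1 b x"
      unfolding dircls_def by auto
    from m2 obtain f2 where y1: "y1 \<in> vcarr (G b2)" and f2: "b' \<le> f2" "b2 \<le> f2" "\<iota> f2 b2 y1 = \<iota> f2 b' y"
      unfolding dircls_def by auto
    define E where "E = max (max e e1) (max f1 f2)"
    have E: "e \<le> E" "e1 \<le> E" "f1 \<le> E" "f2 \<le> E" unfolding E_def by auto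
    have hx: "\<iota> E b1 x1 = \<iota> E b x" by (rule push[OF E(3) f1(2,1) x1 x f1(3)])
    have hy: "\<iota> E b2 y1 = \<iota> E b' y" by (rule push[OF E(4) f2(2,1) y1 y f2(3)])
    have c1: "\<iota> e1 b1 x1 \<in> vcarr (G e1)" "\<iota> e1 b2 y1 \<in> vcarr (G e1)" using i_carr le x1 y1 by auto
    have c2: "\<iota> e b x \<in> vcarr (G e)" "\<iota> e b' y \<in> vcarr (G e)" using i_carr e x y by auto
    have "\<iota> E e1 (vadd (G e1) (\<iota> e1 b1 x1) (\<iota> e1 b2 y1)) = vadd (G E) (\<iota> E b1 x1) (\<iota> E b2 y1)"
      using i_add[OF E(2) c1] i_comp[OF le(1) E(2) x1] i_comp[OF le(2) E(2) y1] by simp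
    moreover have "\<iota> E e (vadd (G e) (\<iota> e b x) (\<iota> e b' y)) = vadd (G E) (\<iota> E b x) (\<iota> E b' y)"
      using i_add[OF E(1) c2] i_comp[OF e(1) E(1) x] i_comp[OF e(2) E(1) y] by simp
    ultimately have "\<iota> E e1 (vadd (G e1) (\<iota> e1 b1 x1) (\<iota> e1 b2 y1)) = \<iota> E e (vadd (G e) (\<iota> e b x) (\<iota> e b' y))"
      using hx hy by simp
    then show "X = dc e (vadd (G e) (\<iota> e b x) (\<iota> e b' y))"
      unfolding X using dc_eq_iff[OF add_carr[OF c2] add_carr[OF c1]] E by blast
  qed
  finally show ?thesis .
qed

lemma smul_dl: assumes x: "x \<in> vcarr (G b)"
  shows "vsmul (dirlimv G \<iota>) k (dc b x) = dc b (vsmul (G b) k x)"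
proof -
  have "vsmul (dirlimv G \<iota>) k (dc b x) = \<Union>{dc b1 (vsmul (G b1) k x1) | b1 x1. (b1, x1) \<in> dc b x}"
    by (simp add: dirlimv_def)
  also have "\<dots> = dc b (vsmul (G b) k x)"
  proof (rule union_const)
    show "{dc b1 (vsmul (G b1) k x1) | b1 x1. (b1, x1) \<in> dc b x} \<noteq> {}" using dc_self[OF x] by blast
  next
    fix X assume "X \<in> {dc b1 (vsmul (G b1) k x1) | b1 x1. (b1, x1) \<in> dc b x}"
    then obtain b1 x1 where X: "X = dc b1 (vsmul (G b1) k x1)" and m: "(b1, x1) \<in> dc b x" by blast
    from m obtain e where x1: "x1 \<in> vcarr (G b1)" and e: "b \<le> e" "b1 \<le> e" "\<iota> e b1 x1 = \<iota> e b x"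
      unfolding dircls_def by auto
    have "\<iota> e b1 (vsmul (G b1) k x1) = \<iota> e b (vsmul (G b) k x)"
      using i_smul[OF e(2) x1] i_smul[OF e(1) x] e(3) by simp
    then show "X = dc b (vsmul (G b) k x)" unfolding X
      using dc_eq_iff[OF smul_carr[OF x] smul_carr[OF x1]] e by blast
  qed
  finally show ?thesis .
qed

lemma zero_dl: "vzero (dirlimv G \<iota>) = dc b (vzero (G b))"
proof -
  have "vzero (dirlimv G \<iota>) = \<Union>{dc b1 (vzero (G b1)) | b1. True}"
    by (simp add: dirlimv_def full_SetCompr_eq)
  also have "\<dots> = dc b (vzero (G b))"
  proof (rule union_const)
    fix X assume "X \<in> {dc b1 (vzero (G b1)) | b1. True}"
    then obtain b1 where X: "X = dc b1 (vzero (G b1))" by blast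
    have "\<iota> (max b b1) b1 (vzero (G b1)) = \<iota> (max b b1) b (vzero (G b))" using i_zero by simp
    then show "X = dc b (vzero (G b))" unfolding X
      using dc_eq_iff[OF zero_carr zero_carr] by (metis max.cobounded1 max.cobounded2)
  qed auto
  finally show ?thesis .
qed

end

lemma dirmap_dc:
  assumes S1: "dsys G \<iota>" and S2: "dsys G' \<iota>'"
    and psi_carr: "\<And>b x. x \<in> vcarr (G b) \<Longrightarrow> \<psi> b x \<in> vcarr (G' b)"
    and psi_comm: "\<And>b e x. b \<le> e \<Longrightarrow> x \<in> vcarr (G b) \<Longrightarrow> \<psi> e (\<iota> e b x) = \<iota>' e b (\<psi> b x)"
    and x: "x \<in> vcarr (G b)"
  shows "dirmap G' \<iota>' \<psi> (dircls G \<iota> b x) = dircls G' \<iota>' b (\<psi> b x)"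
proof -
  interpret S1: dsys G \<iota> by (rule S1)
  interpret S2: dsys G' \<iota>' by (rule S2)
  have "dirmap G' \<iota>' \<psi> (dircls G \<iota> b x) = \<Union>{dircls G' \<iota>' b1 (\<psi> b1 x1) | b1 x1. (b1, x1) \<in> dircls G \<iota> b x}"
    by (simp add: dirmap_def)
  also have "\<dots> = dircls G' \<iota>' b (\<psi> b x)"
  proof (rule union_const)
    show "{dircls G' \<iota>' b1 (\<psi> b1 x1) | b1 x1. (b1, x1) \<in> dircls G \<iota> b x} \<noteq> {}" using S1.dc_self[OF x] by blast
  next
    fix X assume "X \<in> {dircls G' \<iota>' b1 (\<psi> b1 x1) | b1 x1. (b1, x1) \<in> dircls G \<iota> b x}"
    then obtain b1 x1 where X: "X = dircls G' \<iota>' b1 (\<psi> b1 x1)" and m: "(b1, x1) \<in> dircls G \<iota> b x" by blast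
    from m obtain e where x1: "x1 \<in> vcarr (G b1)" and e: "b \<le> e" "b1 \<le> e" "\<iota> e b1 x1 = \<iota> e b x"
      unfolding dircls_def by auto
    have "\<iota>' e b1 (\<psi> b1 x1) = \<iota>' e b (\<psi> b x)"
      using psi_comm[OF e(2) x1] psi_comm[OF e(1) x] e(3) by simp
    then show "X = dircls G' \<iota>' b (\<psi> b x)" unfolding X
      using S2.dc_eq_iff[OF psi_carr[OF x] psi_carr[OF x1]] e by blast
  qed
  finally show ?thesis .
qed

context floer begin

abbreviation "HM a b \<equiv> HMv C f m a b"

lemma HM_elem: "X \<in> vcarr (HM a b) \<Longrightarrow> \<exists>z\<in>Z a b. X = hc a b z"
  using HM_carr by auto

lemma hc_carr: "z \<in> Z a b \<Longrightarrow> hc a b z \<in> vcarr (HM a b)"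
  using HM_carr by auto

lemma HM_elemE:
  assumes "X \<in> vcarr (HM a b)" obtains z where "z \<in> Z a b" "X = hc a b z"
  using HM_elem[OF assms] by blast

lemma dsys_HM: "dsys (\<lambda>b. HM a b) (Hi C f m a)"
  by unfold_locales
    (auto elim!: HM_elemE simp: Hi_hc HM_add HM_smul HM_zero intro!: hc_carr intro: Z_mono Z_add Z_smul Z_zero)

lemma Hp_carr: assumes "a1 \<le> a2" "X \<in> vcarr (HM a1 b)" shows "Hp C f m b a2 a1 X \<in> vcarr (HM a2 b)"
proof -
  obtain z where "z \<in> Z a1 b" "X = hc a1 b z" using HM_elem assms(2) by blast
  then show ?thesis using Hp_hc[OF assms(1)] hc_carr Z_pm[OF _ assms(1)] by simp
qed

lemma Hp_Hi: "a1 \<le> a2 \<Longrightarrow> b \<le> e \<Longrightarrow> X \<in> vcarr (HM a1 b) \<Longrightarrow>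
   Hp C f m e a2 a1 (Hi C f m a1 e b X) = Hi C f m a2 e b (Hp C f m b a2 a1 X)"
  using HM_elem[of X a1 b] Hp_hc Hi_hc by auto

lemma Hp_add: "a1 \<le> a2 \<Longrightarrow> X \<in> vcarr (HM a1 b) \<Longrightarrow> Y \<in> vcarr (HM a1 b) \<Longrightarrow>
   Hp C f m b a2 a1 (vadd (HM a1 b) X Y) = vadd (HM a2 b) (Hp C f m b a2 a1 X) (Hp C f m b a2 a1 Y)"
  using HM_elem[of X a1 b] HM_elem[of Y a1 b] Hp_hc HM_add pm_add by auto

lemma Hp_smul: "a1 \<le> a2 \<Longrightarrow> X \<in> vcarr (HM a1 b) \<Longrightarrow>
   Hp C f m b a2 a1 (vsmul (HM a1 b) k X) = vsmul (HM a2 b) k (Hp C f m b a2 a1 X)"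
  using HM_elem[of X a1 b] Hp_hc HM_smul pm_smul by auto

lemma Hp_zero: "a1 \<le> a2 \<Longrightarrow> Hp C f m b a2 a1 (vzero (HM a1 b)) = vzero (HM a2 b)"
  using Hp_hc HM_zero pm_zero by simp

sublocale H: dsys "\<lambda>b. HM a b" "Hi C f m a" for a by (rule dsys_HM)

abbreviation "LS \<equiv> Lsys C f m"
abbreviation "iL \<equiv> iotaL C f m"

lemma LS_carr: "x \<in> vcarr (LS b) \<longleftrightarrow> (\<forall>a. x a \<in> vcarr (HM a b)) \<and> (\<forall>a1 a2. a1 \<le> a2 \<longrightarrow> Hp C f m b a2 a1 (x a1) = x a2)"
  by (simp add: Lsys_def invlimv_def subv_def prodv_def)

lemma LS_add: "vadd (LS b) x y = (\<lambda>a. vadd (HM a b) (x a) (y a))"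
  by (simp add: Lsys_def invlimv_def subv_def prodv_def)
lemma LS_smul: "vsmul (LS b) k x = (\<lambda>a. vsmul (HM a b) k (x a))"
  by (simp add: Lsys_def invlimv_def subv_def prodv_def)
lemma LS_zero: "vzero (LS b) = (\<lambda>a. vzero (HM a b))"
  by (simp add: Lsys_def invlimv_def subv_def prodv_def)

lemma dsys_LS: "dsys LS iL"
  by unfold_locales
    (auto simp: LS_carr LS_add LS_smul LS_zero iotaL_def H.i_carr H.i_id H.i_comp H.add_carr H.smul_carr
      H.zero_carr H.i_add H.i_smul H.i_zero Hp_Hi Hp_add Hp_smul Hp_zero)

sublocale L: dsys LS iL by (rule dsys_LS)

definition gclass :: "real \<Rightarrow> real \<Rightarrow> ('c \<Rightarrow> 'k) \<Rightarrow> (real \<times> ('c \<Rightarrow> 'k) set) set" where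
  "gclass a b z = dircls (\<lambda>b. HM a b) (Hi C f m a) b (hc a b z)"

abbreviation "GS a \<equiv> Gsys C f m a"

lemma GS_carr: "vcarr (GS a) = {gclass a b z | b z. z \<in> Z a b}"
  unfolding Gsys_def H.carr_dl gclass_def using HM_elem hc_carr by blast

lemma gclass_carr: "z \<in> Z a b \<Longrightarrow> gclass a b z \<in> vcarr (GS a)"
  unfolding GS_carr by blast

lemma gclass_mono: assumes "z \<in> Z a b" "b \<le> b'" shows "gclass a b' z = gclass a b z"
proof -
  have "hc a b' z = Hi C f m a b' b (hc a b z)" using Hi_hc[OF assms(2)] by simp
  then show ?thesis unfolding gclass_def using H.dc_push[OF hc_carr[OF assms(1)] assms(2)] by simp
qed

lemma gclass_eq: assumes "z \<in> Z a b" "z' \<in> Z a b'"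
  shows "gclass a b' z' = gclass a b z \<longleftrightarrow> (\<exists>e. z' - z \<in> B a e)"
proof -
  have "\<forall>e. b \<le> e \<and> b' \<le> e \<longrightarrow> (Hi C f m a e b' (hc a b' z') = Hi C f m a e b (hc a b z) \<longleftrightarrow> z' - z \<in> B a e)"
    by (simp add: Hi_hc hc_eq)
  then have "gclass a b' z' = gclass a b z \<longleftrightarrow> (\<exists>e. b \<le> e \<and> b' \<le> e \<and> z' - z \<in> B a e)"
    unfolding gclass_def H.dc_eq_iff[OF hc_carr[OF assms(1)] hc_carr[OF assms(2)]] by blast
  also have "\<dots> \<longleftrightarrow> (\<exists>e. z' - z \<in> B a e)"
    by (rule ex_level_raise) (rule B_mono)
  finally show ?thesis .
qed

lemma gclass_add: assumes "z \<in> Z a b" "z' \<in> Z a b'"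
  shows "vadd (GS a) (gclass a b z) (gclass a b' z') = gclass a (max b b') (z + z')"
  unfolding gclass_def Gsys_def using H.add_dl[OF hc_carr[OF assms(1)] hc_carr[OF assms(2)], of "max b b'"]
  by (simp add: Hi_hc HM_add)

lemma gclass_smul: assumes "z \<in> Z a b"
  shows "vsmul (GS a) k (gclass a b z) = gclass a b (\<lambda>c. k * z c)"
  unfolding gclass_def Gsys_def using H.smul_dl[OF hc_carr[OF assms(1)]] by (simp add: HM_smul)

lemma gclass_zero: "vzero (GS a) = gclass a b 0"
  unfolding gclass_def Gsys_def H.zero_dl[of _ b] by (simp add: HM_zero)

lemma piG_gclass: assumes "a1 \<le> a2" "z \<in> Z a1 b"
  shows "piG C f m a2 a1 (gclass a1 b z) = gclass a2 b (pm a2 z)"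
proof -
  have "piG C f m a2 a1 (gclass a1 b z) = dircls (\<lambda>b. HM a2 b) (Hi C f m a2) b (Hp C f m b a2 a1 (hc a1 b z))"
    unfolding piG_def gclass_def
    by (rule dirmap_dc[OF dsys_HM dsys_HM]) (simp_all add: Hp_carr[OF assms(1)] Hp_Hi[OF assms(1)] hc_carr[OF assms(2)])
  then show ?thesis by (simp add: Hp_hc[OF assms(1)] gclass_def)
qed

(* Global cycles below b: chains z below b with D z = 0.  Their truncations form a
   compatible family cycle_fam b z in L_b, whose class oclass b z lies in the direct limit
   overHM; every element of overHM arises this way (see lift_Lsys below). *)
definition gcycles :: "real \<Rightarrow> ('c \<Rightarrow> 'k) set" where
  "gcycles b = {z \<in> Below b. D z = 0}"

definition cycle_fam :: "real \<Rightarrow> ('c \<Rightarrow> 'k) \<Rightarrow> real \<Rightarrow> ('c \<Rightarrow> 'k) set" where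
  "cycle_fam b z = (\<lambda>a. hc a b (pm a z))"

definition oclass :: "real \<Rightarrow> ('c \<Rightarrow> 'k) \<Rightarrow> (real \<times> (real \<Rightarrow> ('c \<Rightarrow> 'k) set)) set" where
  "oclass b z = dircls LS iL b (cycle_fam b z)"

lemma gcycles_pm: assumes "z \<in> gcycles b" shows "pm a z \<in> Z a b"
proof -
  have z: "z \<in> Below b" "D z = 0" using assms by (auto simp: gcycles_def)
  have "pm a (D (pm a z)) = pm a (D z)" by (rule D_pm[OF Below_bdd[OF z(1)]])
  then show ?thesis using z pm_CM[OF z(1)] by (simp add: cycles_iff)
qed

lemma gcycles_mono: "z \<in> gcycles b \<Longrightarrow> b \<le> b' \<Longrightarrow> z \<in> gcycles b'"
  unfolding gcycles_def using bchains_mono by blast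

lemma cycle_fam_carr: assumes "z \<in> gcycles b" shows "cycle_fam b z \<in> vcarr (LS b)"
  unfolding LS_carr cycle_fam_def
  using hc_carr[OF gcycles_pm[OF assms]] by (auto simp: Hp_hc pm_pm)

lemma iL_cycle_fam: "b \<le> e \<Longrightarrow> iL e b (cycle_fam b z) = cycle_fam e z"
  by (simp add: iotaL_def cycle_fam_def Hi_hc)

lemma oclass_mono: assumes "z \<in> gcycles b" "b \<le> b'" shows "oclass b' z = oclass b z"
  unfolding oclass_def using L.dc_push[OF cycle_fam_carr[OF assms(1)] assms(2)] iL_cycle_fam[OF assms(2)] by simp

lemma oclass_eq: assumes "z \<in> gcycles b" "z' \<in> gcycles b'"
  shows "oclass b' z' = oclass b z \<longleftrightarrow> (\<exists>e. \<forall>a. pm a (z' - z) \<in> B a e)"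
proof -
  have "oclass b' z' = oclass b z \<longleftrightarrow> (\<exists>e. b \<le> e \<and> b' \<le> e \<and> cycle_fam e z' = cycle_fam e z)"
    unfolding oclass_def L.dc_eq_iff[OF cycle_fam_carr[OF assms(1)] cycle_fam_carr[OF assms(2)]]
    using iL_cycle_fam by (intro iff_exI) auto
  also have "\<dots> \<longleftrightarrow> (\<exists>e. b \<le> e \<and> b' \<le> e \<and> (\<forall>a. pm a (z' - z) \<in> B a e))"
    by (simp add: cycle_fam_def fun_eq_iff hc_eq pm_diff)
  also have "\<dots> \<longleftrightarrow> (\<exists>e. \<forall>a. pm a (z' - z) \<in> B a e)"
    by (rule ex_level_raise) (blast intro: B_mono)
  finally show ?thesis .
qed

lemma cycle_fam_add: "vadd (LS b) (cycle_fam b z) (cycle_fam b z') = cycle_fam b (z + z')"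
  by (simp add: LS_add cycle_fam_def HM_add pm_add)

lemma cycle_fam_smul: "vsmul (LS b) k (cycle_fam b z) = cycle_fam b (\<lambda>c. k * z c)"
  by (simp add: LS_smul cycle_fam_def HM_smul pm_smul)

abbreviation "OH \<equiv> overHM C f m"

lemma oclass_add: assumes "z \<in> gcycles b" "z' \<in> gcycles b"
  shows "vadd OH (oclass b z) (oclass b z') = oclass b (z + z')"
  unfolding oclass_def overHM_def using L.add_dl[OF cycle_fam_carr[OF assms(1)] cycle_fam_carr[OF assms(2)] order_refl order_refl]
    L.i_id cycle_fam_carr assms by (simp add: cycle_fam_add)

lemma oclass_smul: assumes "z \<in> gcycles b"
  shows "vsmul OH k (oclass b z) = oclass b (\<lambda>c. k * z c)"
  unfolding oclass_def overHM_def using L.smul_dl[OF cycle_fam_carr[OF assms(1)]] by (simp add: cycle_fam_smul)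

lemma oclass_carr: "z \<in> gcycles b \<Longrightarrow> oclass b z \<in> vcarr OH"
  unfolding oclass_def overHM_def L.carr_dl using cycle_fam_carr by blast

lemma OH_carr: "vcarr OH = {dircls LS iL b x | b x. x \<in> vcarr (LS b)}"
  unfolding overHM_def L.carr_dl by simp

lemma kappa_dc: assumes "x \<in> vcarr (LS b)"
  shows "kappa C f m (dircls LS iL b x) = (\<lambda>a. dircls (\<lambda>b. HM a b) (Hi C f m a) b (x a))"
proof
  fix a show "kappa C f m (dircls LS iL b x) a = dircls (\<lambda>b. HM a b) (Hi C f m a) b (x a)"
    unfolding kappa_def
    by (rule dirmap_dc[OF dsys_LS dsys_HM, where \<psi>="\<lambda>b x. x a"]) (use assms in \<open>auto simp: LS_carr iotaL_def\<close>)
qed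

lemma kappa_oclass: assumes "z \<in> gcycles b" shows "kappa C f m (oclass b z) = (\<lambda>a. gclass a b (pm a z))"
  unfolding oclass_def kappa_dc[OF cycle_fam_carr[OF assms]] by (simp add: cycle_fam_def gclass_def)

lemma UH_zero: "vzero (underHM C f m) = (\<lambda>a. vzero (GS a))"
  by (simp add: underHM_def invlimv_def subv_def prodv_def)

lemma kappa_zero_iff: assumes z: "z \<in> gcycles b"
  shows "kappa C f m (oclass b z) = vzero (underHM C f m) \<longleftrightarrow> (\<forall>a. \<exists>e. pm a z \<in> B a e)"
proof -
  have "kappa C f m (oclass b z) = vzero (underHM C f m) \<longleftrightarrow> (\<forall>a. gclass a b (pm a z) = gclass a b 0)"
    unfolding kappa_oclass[OF z] UH_zero fun_eq_iff using gclass_zero by metis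
  then show ?thesis using gclass_eq[OF Z_zero gcycles_pm[OF z]] by simp
qed
end

lemma compatible_sequence_exists:
  assumes ne: "\<And>n. E n \<noteq> {}" and surj: "\<And>n. p n ` E (Suc n) = E n"
  shows "\<exists>x. \<forall>n. x n \<in> E n \<and> p n (x (Suc n)) = x n"
proof -
  have "\<forall>n y. \<exists>y'. y \<in> E n \<longrightarrow> y' \<in> E (Suc n) \<and> p n y' = y"
    using surj by (metis imageE)
  then obtain nxt where nxt: "\<And>n y. y \<in> E n \<Longrightarrow> nxt n y \<in> E (Suc n) \<and> p n (nxt n y) = y"
    by metis
  obtain x0 where x0: "x0 \<in> E 0" using ne by blast
  define x where "x = rec_nat x0 nxt"
  have xE: "x n \<in> E n" for n
    by (induction n) (simp_all add: x_def x0 nxt)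
  have "p n (x (Suc n)) = x n" for n
    using nxt[OF xE[of n]] by (simp add: x_def)
  then show ?thesis using xE by blast
qed

lemma antimono_nat_stable:
  fixes d :: "nat \<Rightarrow> nat"
  assumes "\<And>k k'. k \<le> k' \<Longrightarrow> d k' \<le> d k"
  shows "\<exists>K. \<forall>k\<ge>K. d k = d K"
proof -
  obtain K where K: "\<forall>k. d K \<le> d k"
    using ex_has_least_nat[of "\<lambda>_. True" 0 d] by auto
  show ?thesis
  proof (intro exI allI impI)
    fix k assume "K \<le> k"
    then show "d k = d K" using assms[of K k] K by (simp add: antisym)
  qed
qed

(* Linear algebra: a decreasing sequence of subspaces of the span of a finite set is
   eventually constant, because dimensions decrease and a subspace of the same finite
   dimension is the whole space. *)
context vector_space begin

lemma dim_mono_fin_span: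
  assumes ST: "S \<subseteq> T" and F: "T \<subseteq> span F" "finite F"
  shows "dim S \<le> dim T"
proof -
  obtain BS where BS: "BS \<subseteq> S" "independent BS" "S \<subseteq> span BS" "card BS = dim S"
    using basis_exists by blast
  obtain BT where BT: "BT \<subseteq> T" "independent BT" "T \<subseteq> span BT" "card BT = dim T"
    using basis_exists by blast
  have finBT: "finite BT" using independent_span_bound[OF F(2) BT(2)] BT(1) F(1) by blast
  have "BS \<subseteq> span BT" using BS(1) ST BT(3) by blast
  from independent_span_bound[OF finBT BS(2) this] show ?thesis using BS(4) BT(4) by simp
qed

lemma subspace_eq_if_dim_le:
  assumes S: "subspace S" and ST: "S \<subseteq> T" and F: "T \<subseteq> span F" "finite F"
    and d: "dim T \<le> dim S"
  shows "S = T"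
proof (rule ccontr)
  assume "S \<noteq> T"
  then obtain t where t: "t \<in> T" "t \<notin> S" using ST by blast
  obtain BS where BS: "BS \<subseteq> S" "independent BS" "S \<subseteq> span BS" "card BS = dim S"
    using basis_exists by blast
  obtain BT where BT: "BT \<subseteq> T" "independent BT" "T \<subseteq> span BT" "card BT = dim T"
    using basis_exists by blast
  have finBT: "finite BT" using independent_span_bound[OF F(2) BT(2)] BT(1) F(1) by blast
  have tBS: "t \<notin> span BS" using span_subspace[OF BS(1) BS(3) S] t by simp
  have ind: "independent (insert t BS)" using independent_insertI[OF tBS BS(2)] .
  have "insert t BS \<subseteq> span BT" using BT(3) t(1) BS(1) ST by blast
  from independent_span_bound[OF finBT ind this]
  have "finite (insert t BS)" and "card (insert t BS) \<le> card BT" by auto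
  moreover have "t \<notin> BS" using tBS span_base by blast
  ultimately show False using BS(4) BT(4) d by simp
qed

lemma decreasing_subspaces_stabilize:
  fixes S :: "nat \<Rightarrow> 'b set"
  assumes sub: "\<And>k. subspace (S k)" and dec: "\<And>k k'. k \<le> k' \<Longrightarrow> S k' \<subseteq> S k"
    and F: "S 0 \<subseteq> span F" "finite F"
  shows "\<exists>K. \<forall>k\<ge>K. S k = S K"
proof -
  have span: "S k \<subseteq> span F" for k using subset_trans[OF dec[OF le0] F(1)] .
  have mono: "dim (S k') \<le> dim (S k)" if "k \<le> k'" for k k'
    using dim_mono_fin_span[OF dec[OF that] span F(2)] .
  obtain K where K: "\<forall>k\<ge>K. dim (S k) = dim (S K)"
    using antimono_nat_stable[of "\<lambda>k. dim (S k)", OF mono] by blast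
  have "S k = S K" if "K \<le> k" for k
  proof (rule subspace_eq_if_dim_le[OF sub dec[OF that] span F(2)])
    show "dim (S K) \<le> dim (S k)" using K[rule_format, OF that] by simp
  qed
  then show ?thesis by blast
qed

lemma subspace_translate_eq:
  assumes I: "subspace I" and uv: "u - v \<in> I"
  shows "(\<lambda>w. u + w) ` I = (\<lambda>w. v + w) ` I"
proof -
  have sub: "(\<lambda>w. u + w) ` I \<subseteq> (\<lambda>w. v + w) ` I" if "u - v \<in> I" for u v
  proof
    fix x assume "x \<in> (\<lambda>w. u + w) ` I"
    then obtain w where w: "w \<in> I" "x = u + w" by blast
    then have "x = v + ((u - v) + w)" "(u - v) + w \<in> I" using subspace_add[OF I that w(1)] by auto
    then show "x \<in> (\<lambda>w. v + w) ` I" by blast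
  qed
  have "v - u \<in> I" using subspace_neg[OF I uv] by simp
  then show ?thesis using sub uv by blast
qed

end

interpretation fv: vector_space "\<lambda>(k::'k::field) (x::'c \<Rightarrow> 'k). (\<lambda>c. k * x c)"
  by unfold_locales (auto simp: fun_eq_iff algebra_simps)

definition unit_chain :: "'c \<Rightarrow> 'c \<Rightarrow> 'k::field" where "unit_chain c = (\<lambda>c'. if c' = c then 1 else 0)"

context floer begin

lemma CM_span: "CM a b \<subseteq> fv.span (unit_chain ` Cab C f a b)"
proof
  fix x :: "'c \<Rightarrow> 'k" assume x: "x \<in> CM a b"
  have "x = (\<Sum>c\<in>Cab C f a b. (\<lambda>c'. x c * unit_chain c c'))"
  proof (rule ext)
    fix c'
    have "(\<Sum>c\<in>Cab C f a b. x c * unit_chain c c') = (\<Sum>c\<in>Cab C f a b. if c = c' then x c else 0)"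
      by (intro sum.cong) (auto simp: unit_chain_def)
    also have "\<dots> = x c'" using x fin_Cab[of a b] by (auto simp: CM_iff Cab_def)
    finally show "x c' = (\<Sum>c\<in>Cab C f a b. (\<lambda>c'. x c * unit_chain c c')) c'" by (simp add: sum_fun_apply)
  qed
  also have "\<dots> \<in> fv.span (unit_chain ` Cab C f a b)"
    by (intro fv.span_sum fv.span_scale fv.span_base) auto
  finally show "x \<in> fv.span (unit_chain ` Cab C f a b)" .
qed

lemma subspace_pm_image: assumes "fv.subspace W" shows "fv.subspace (pm a ` W)"
proof (rule fv.subspaceI)
  show "0 \<in> pm a ` W" using fv.subspace_0[OF assms] by (metis image_eqI pm_zero)
  show "x + y \<in> pm a ` W" if "x \<in> pm a ` W" "y \<in> pm a ` W" for x y
    using that fv.subspace_add[OF assms] by (auto simp: pm_add[symmetric])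
  show "(\<lambda>i. k * x i) \<in> pm a ` W" if "x \<in> pm a ` W" for k x
    using that fv.subspace_scale[OF assms] by (auto simp: pm_smul[symmetric])
qed

lemma subspace_Z: "fv.subspace (Z a b)"
  using Z_zero Z_add Z_smul by (intro fv.subspaceI)

lemma subspace_B: "fv.subspace (B a b)"
  using B_zero B_add B_smul by (intro fv.subspaceI)

end

locale floer_seq = floer C f m for C :: "'c set" and f :: "'c \<Rightarrow> real" and m :: "'c \<Rightarrow> 'c \<Rightarrow> 'k::field" +
  fixes aseq :: "nat \<Rightarrow> real"
  assumes dec: "\<forall>j. aseq (Suc j) \<le> aseq j"
    and lim: "filterlim aseq at_bot sequentially"
begin

lemma decS: "aseq (Suc j) \<le> aseq j"
  using dec by blast

lemma anti: "n \<le> k \<Longrightarrow> aseq k \<le> aseq n"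
  using decseq_SucI[of aseq, OF decS] by (rule decseqD)

lemma unb: "\<exists>n. aseq n \<le> r"
proof -
  have "eventually (\<lambda>n. aseq n \<le> r) sequentially" using lim by (simp add: filterlim_at_bot)
  then show ?thesis by (meson eventually_sequentially order_refl)
qed

lemma tower_closed:
  assumes S: "\<And>n. S n \<subseteq> CM (aseq n) b" and trunc: "\<And>n. pm (aseq n) ` S (Suc n) \<subseteq> S n"
    and nk: "n \<le> k"
  shows "pm (aseq n) ` S k \<subseteq> S n"
  using nk
proof (induction k rule: dec_induct)
  case base
  then show ?case using S pm_id by force
next
  case (step k)
  have "pm (aseq n) ` S (Suc k) = pm (aseq n) ` pm (aseq k) ` S (Suc k)"
    using pm_pm[OF anti[OF step.hyps(1)]] by (simp add: image_image)
  also have "\<dots> \<subseteq> pm (aseq n) ` S k" using trunc by (intro image_mono)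
  finally show ?case using step.IH by blast
qed

(* Mittag-Leffler property of towers of subspaces: for fixed n, the images of the W_k in
   the finite-dimensional space CM_{a_n}^b decrease and are eventually constant. *)
lemma tower_images_stabilize:
  assumes W: "\<And>k. fv.subspace (W k)" "\<And>k. W k \<subseteq> CM (aseq k) b" "\<And>k. pm (aseq k) ` W (Suc k) \<subseteq> W k"
  shows "\<exists>K\<ge>n. \<forall>k\<ge>K. pm (aseq n) ` W k = pm (aseq n) ` W K"
proof -
  define S where "S j = pm (aseq n) ` W (n + j)" for j
  have dec: "S j' \<subseteq> S j" if "j \<le> j'" for j j'
  proof -
    have "S j' = pm (aseq n) ` pm (aseq (n + j)) ` W (n + j')"
      unfolding S_def using pm_pm[OF anti[of n "n + j"]] by (simp add: image_image)
    also have "\<dots> \<subseteq> S j"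
      unfolding S_def using tower_closed[OF W(2,3), of "n + j" "n + j'"] that by (intro image_mono) auto
    finally show ?thesis .
  qed
  have span: "S 0 \<subseteq> fv.span (unit_chain ` Cab C f (aseq n) b)"
    unfolding S_def using W(2) pm_CM2 CM_span by blast
  have sub: "fv.subspace (S j)" for j
    unfolding S_def by (rule subspace_pm_image[OF W(1)])
  obtain K where K: "\<forall>j\<ge>K. S j = S K"
    using fv.decreasing_subspaces_stabilize[of S, OF sub dec span] fin_Cab by blast
  have "pm (aseq n) ` W k = pm (aseq n) ` W (n + K)" if "n + K \<le> k" for k
  proof -
    have "K \<le> k - n" and k: "n + (k - n) = k" using that by auto
    then have "S (k - n) = S K" using K by blast
    then show ?thesis unfolding S_def by (simp add: k)
  qed
  then show ?thesis using le_add1 by blast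
qed

lemma affine_tower_images_stabilize:
  assumes W: "\<And>k. fv.subspace (W k)" "\<And>k. W k \<subseteq> CM (aseq k) b" "\<And>k. pm (aseq k) ` W (Suc k) \<subseteq> W k"
    and A: "\<And>k. A k \<subseteq> CM (aseq k) b" "\<And>k. pm (aseq k) ` A (Suc k) \<subseteq> A k"
    and v: "\<And>k. v k \<in> A k" and coset: "\<And>k. A k = (\<lambda>w. v k + w) ` W k"
  shows "\<exists>K\<ge>n. \<forall>k\<ge>K. pm (aseq n) ` A k = pm (aseq n) ` A K"
proof -
  obtain K where K: "K \<ge> n" "\<forall>k\<ge>K. pm (aseq n) ` W k = pm (aseq n) ` W K"
    using tower_images_stabilize[OF W] by blast
  have img: "pm (aseq n) ` A k = (\<lambda>w. pm (aseq n) (v k) + w) ` (pm (aseq n) ` W k)" for k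
    unfolding coset[of k] by (auto simp: image_image pm_add)
  have "pm (aseq n) ` A k = pm (aseq n) ` A K" if k: "K \<le> k" for k
  proof -
    have "pm (aseq K) (v k) \<in> A K" using tower_closed[OF A k] v by blast
    then have "pm (aseq n) (v k) \<in> pm (aseq n) ` A K"
      using pm_pm[OF anti[OF K(1)]] by (metis image_eqI)
    then obtain w where "w \<in> pm (aseq n) ` W K" "pm (aseq n) (v k) = pm (aseq n) (v K) + w"
      unfolding img by blast
    then have "pm (aseq n) (v k) - pm (aseq n) (v K) \<in> pm (aseq n) ` W K" by simp
    then show ?thesis unfolding img K(2)[rule_format, OF k]
      using fv.subspace_translate_eq[OF subspace_pm_image[OF W(1)]] by blast
  qed
  then show ?thesis using K(1) by blast
qed

lemma glue_compatible_sequence: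
  assumes x: "\<And>n. x n \<in> CM (aseq n) b" and comp: "\<And>n. pm (aseq n) (x (Suc n)) = x n"
  shows "\<exists>z \<in> Below b. \<forall>n. pm (aseq n) z = x n"
proof -
  have xk: "pm (aseq n) (x k) = x n" if "n \<le> k" for n k
    using tower_closed[of "\<lambda>n. {x n}" b n k] x comp that by auto
  define N where "N c = (LEAST n. aseq n \<le> f c)" for c
  have N: "aseq (N c) \<le> f c" for c unfolding N_def by (rule LeastI_ex) (rule unb)
  have Nle: "N c \<le> n" if "aseq n \<le> f c" for n c unfolding N_def using that by (rule Least_le)
  define z where "z c = x (N c) c" for c
  have "pm (aseq n) z = x n" for n
  proof
    fix c show "pm (aseq n) z c = x n c"
    proof (cases "aseq n \<le> f c")
      case True
      then have "x (N c) c = pm (aseq (N c)) (x n) c" using xk[OF Nle[OF True]] by simp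
      then show ?thesis using True N by (simp add: pmap_def z_def)
    next
      case False then show ?thesis using x[of n] by (auto simp: pmap_def CM_iff)
    qed
  qed
  moreover have "z \<in> Below b" using x by (auto simp: z_def bchains_def CM_iff)
  ultimately show ?thesis by blast
qed

(* The stable images form a tower with surjective truncations, which has a compatible
   sequence of elements; these glue to a single chain. *)
lemma mittag_leffler_lift:
  assumes W: "\<And>n. fv.subspace (W n)" "\<And>n. W n \<subseteq> CM (aseq n) b" "\<And>n. pm (aseq n) ` W (Suc n) \<subseteq> W n"
    and A: "\<And>n. A n \<subseteq> CM (aseq n) b" "\<And>n. pm (aseq n) ` A (Suc n) \<subseteq> A n"
    and v: "\<And>n. v n \<in> A n"
    and diff: "\<And>n x. x \<in> A n \<Longrightarrow> x - v n \<in> W n" and add: "\<And>n w. w \<in> W n \<Longrightarrow> v n + w \<in> A n"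
  shows "\<exists>z \<in> Below b. \<forall>n. pm (aseq n) z \<in> A n"
proof -
  have coset: "A n = (\<lambda>w. v n + w) ` W n" for n
  proof (intro equalityI subsetI)
    fix x assume "x \<in> A n"
    then show "x \<in> (\<lambda>w. v n + w) ` W n" using diff by (intro image_eqI[of _ _ "x - v n"]) auto
  qed (use add in blast)
  define P where "P n k = pm (aseq n) ` A k" for n k
  have "\<forall>n. \<exists>K\<ge>n. \<forall>k\<ge>K. P n k = P n K"
    unfolding P_def using affine_tower_images_stabilize[OF W A v coset] by blast
  then obtain K where K: "\<And>n. K n \<ge> n" "\<And>n k. K n \<le> k \<Longrightarrow> P n k = P n (K n)" by metis
  define E where "E n = P n (K n)" for n
  have E_sub: "E n \<subseteq> A n" for n
    unfolding E_def P_def using tower_closed[OF A K(1)] .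
  have E_ne: "E n \<noteq> {}" for n
    unfolding E_def P_def using v by blast
  have E_step: "pm (aseq n) ` E (Suc n) = E n" for n
  proof -
    define k where "k = max (K n) (K (Suc n))"
    have "pm (aseq n) ` E (Suc n) = pm (aseq n) ` P (Suc n) k"
      unfolding E_def using K(2)[of "Suc n" k] by (simp add: k_def)
    also have "\<dots> = P n k"
      unfolding P_def using pm_pm[OF decS[of n]] by (simp add: image_image)
    also have "\<dots> = E n"
      unfolding E_def using K(2)[of n k] by (simp add: k_def)
    finally show ?thesis .
  qed
  obtain x where x: "\<And>n. x n \<in> E n" "\<And>n. pm (aseq n) (x (Suc n)) = x n"
    using compatible_sequence_exists[of E "\<lambda>n. pm (aseq n)", OF E_ne E_step] by blast
  obtain z where "z \<in> Below b" "\<And>n. pm (aseq n) z = x n"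
    using glue_compatible_sequence[of x b] x E_sub A(1) by blast
  then show ?thesis using x E_sub by (metis subsetD)
qed

lemma gcycles_of_trunc_cycles:
  assumes z: "z \<in> Below b" and Z: "\<And>n. pm (aseq n) z \<in> Z (aseq n) b"
  shows "z \<in> gcycles b"
proof -
  have "D z c' = 0" for c'
  proof -
    obtain n where n: "aseq n \<le> f c'" using unb by blast
    have "pm (aseq n) (D (pm (aseq n) z)) c' = 0" using Z[of n] by (simp add: cycles_iff)
    then show ?thesis using n D_pm_at[OF Below_bdd[OF z] n] by (simp add: pmap_def)
  qed
  then show ?thesis using z by (auto simp: gcycles_def)
qed

(* Every element x of L_b = lim_a HM_a^b is represented by a global cycle below b: apply
   Mittag-Leffler lifting to the affine spaces of cycles representing the classes x(a_n). *)
lemma lift_Lsys: assumes x: "x \<in> vcarr (LS b)" shows "\<exists>z \<in> gcycles b. cycle_fam b z = x"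
proof -
  have xa: "x a \<in> vcarr (HM a b)" for a using x by (simp add: LS_carr)
  have xc: "Hp C f m b a2 a1 (x a1) = x a2" if "a1 \<le> a2" for a1 a2 using x that by (simp add: LS_carr)
  define A where "A n = {r \<in> Z (aseq n) b. hc (aseq n) b r = x (aseq n)}" for n
  have "\<exists>r. r \<in> A n" for n using HM_elem[OF xa[of "aseq n"]] unfolding A_def by fastforce
  then obtain v where v: "\<And>n. v n \<in> A n" by metis
  have "\<exists>z \<in> Below b. \<forall>n. pm (aseq n) z \<in> A n"
  proof (rule mittag_leffler_lift[of "\<lambda>n. B (aseq n) b" b A v])
    show "fv.subspace (B (aseq n) b)" for n by (rule subspace_B)
    show "B (aseq n) b \<subseteq> CM (aseq n) b" for n using bdries_CM by blast
    show "pm (aseq n) ` B (aseq (Suc n)) b \<subseteq> B (aseq n) b" for n using B_pm[OF _ decS] by blast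
    show "A n \<subseteq> CM (aseq n) b" for n by (auto simp: A_def cycles_iff)
    show "pm (aseq n) ` A (Suc n) \<subseteq> A n" for n
    proof
      fix y assume "y \<in> pm (aseq n) ` A (Suc n)"
      then obtain r where r: "r \<in> A (Suc n)" "y = pm (aseq n) r" by blast
      have "hc (aseq n) b y = Hp C f m b (aseq n) (aseq (Suc n)) (hc (aseq (Suc n)) b r)"
        using r(2) Hp_hc[OF decS[of n]] by simp
      also have "\<dots> = x (aseq n)" using r(1) xc[OF decS] by (simp add: A_def)
      finally show "y \<in> A n" using r Z_pm[OF _ decS] by (simp add: A_def)
    qed
    show "v n \<in> A n" for n by (rule v)
    show "r - v n \<in> B (aseq n) b" if "r \<in> A n" for n r
      using that v[of n] hc_eq[of "aseq n" b r "v n"] by (simp add: A_def)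
    show "v n + w \<in> A n" if "w \<in> B (aseq n) b" for n w
      using that v[of n] Z_add[OF _ bdries_cycles] hc_eq[of "aseq n" b "v n + w" "v n"] by (simp add: A_def)
  qed
  then obtain z where z: "z \<in> Below b" "\<And>n. pm (aseq n) z \<in> A n" by blast
  have "cycle_fam b z = x"
  proof
    fix a obtain n where n: "aseq n \<le> a" using unb by blast
    have "hc a b (pm a z) = Hp C f m b a (aseq n) (hc (aseq n) b (pm (aseq n) z))"
      using Hp_hc[OF n] pm_pm[OF n] by simp
    also have "\<dots> = x a" using z(2)[of n] xc[OF n] by (simp add: A_def)
    finally show "cycle_fam b z a = x a" by (simp add: cycle_fam_def)
  qed
  moreover have "z \<in> gcycles b" using gcycles_of_trunc_cycles[OF z(1)] z(2) by (simp add: A_def)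
  ultimately show ?thesis by blast
qed

lemma lift_boundary: assumes zB: "\<And>n. pm (aseq n) z \<in> B (aseq n) e"
  shows "\<exists>w \<in> Below e. \<forall>n. pm (aseq n) (D w) = pm (aseq n) z"
proof -
  define A where "A n = {w \<in> CM (aseq n) e. pm (aseq n) (D w) = pm (aseq n) z}" for n
  have "\<exists>r. r \<in> A n" for n using zB[of n] unfolding A_def bdries_iff by fastforce
  then obtain v where v: "\<And>n. v n \<in> A n" by metis
  have "\<exists>w \<in> Below e. \<forall>n. pm (aseq n) w \<in> A n"
  proof (rule mittag_leffler_lift[of "\<lambda>n. Z (aseq n) e" e A v])
    show "fv.subspace (Z (aseq n) e)" for n by (rule subspace_Z)
    show "Z (aseq n) e \<subseteq> CM (aseq n) e" for n by (auto simp: cycles_iff)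
    show "pm (aseq n) ` Z (aseq (Suc n)) e \<subseteq> Z (aseq n) e" for n using Z_pm[OF _ decS] by blast
    show "A n \<subseteq> CM (aseq n) e" for n by (auto simp: A_def)
    show "pm (aseq n) ` A (Suc n) \<subseteq> A n" for n
    proof
      fix y assume "y \<in> pm (aseq n) ` A (Suc n)"
      then obtain r where r: "r \<in> A (Suc n)" "y = pm (aseq n) r" by blast
      have rC: "r \<in> CM (aseq (Suc n)) e" using r by (simp add: A_def)
      have "pm (aseq n) (D y) = pm (aseq n) (pm (aseq (Suc n)) (D r))"
        using r(2) D_pm[OF CM_bdd[OF rC]] pm_pm[OF decS] by simp
      also have "\<dots> = pm (aseq n) z" using r pm_pm[OF decS] by (simp add: A_def)
      finally show "y \<in> A n" using r(2) pm_CM2[OF rC] by (simp add: A_def)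
    qed
    show "v n \<in> A n" for n by (rule v)
    show "r - v n \<in> Z (aseq n) e" if "r \<in> A n" for n r
      using that v[of n] by (auto simp: A_def cycles_iff CM_diff D_diff[OF CM_bdd CM_bdd] pm_diff)
    show "v n + w \<in> A n" if "w \<in> Z (aseq n) e" for n w
      using that v[of n] by (auto simp: A_def cycles_iff CM_add D_add[OF CM_bdd CM_bdd] pm_add)
  qed
  then obtain w where w: "w \<in> Below e" "\<And>n. pm (aseq n) w \<in> A n" by blast
  have "pm (aseq n) (D w) = pm (aseq n) z" for n
    using w(2)[of n] D_pm[OF Below_bdd[OF w(1)]] by (simp add: A_def)
  then show ?thesis using w(1) by blast
qed

definition tail :: "real \<Rightarrow> ('c \<Rightarrow> 'k) \<Rightarrow> ('c \<Rightarrow> 'k)" where "tail a x = x - pm a x"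

lemma tail_Below: assumes "bdd x" "a \<le> a'" shows "tail a x \<in> Below a'"
  using assms bdd_inC[OF assms(1)] by (auto simp: tail_def bchains_def pmap_def)

(* fcycles a: cycles of CM_a^b for some b; these represent the elements of G_a.
   Seqs: sequences (y_j) with y_j in fcycles a_j, the common parameter space of ker kappa
   and lim^1 G.  Delta_ch is the chain-level version of the map Delta defining lim^1. *)
definition fcycles :: "real \<Rightarrow> ('c \<Rightarrow> 'k) set" where "fcycles a = {x. \<exists>b. x \<in> Z a b}"
definition Seqs :: "(nat \<Rightarrow> 'c \<Rightarrow> 'k) set" where "Seqs = {y. \<forall>j. y j \<in> fcycles (aseq j)}"
definition Delta_ch :: "(nat \<Rightarrow> 'c \<Rightarrow> 'k) \<Rightarrow> nat \<Rightarrow> ('c \<Rightarrow> 'k)" where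
  "Delta_ch g j = g j - pm (aseq j) (g (Suc j))"

(* The connecting cycle of y: minus the sum of the D(y_i); near a generator c only the
   finitely many i with a_i > f c contribute, since y_i is a cycle above a_i.  Its
   truncation at a_j is the truncated differential of the partial sum psum y j. *)
definition conn :: "(nat \<Rightarrow> 'c \<Rightarrow> 'k) \<Rightarrow> ('c \<Rightarrow> 'k)" where
  "conn y = (\<lambda>c. - (\<Sum>i\<in>{i. f c < aseq i}. D (y i) c))"
definition psum :: "(nat \<Rightarrow> 'c \<Rightarrow> 'k) \<Rightarrow> nat \<Rightarrow> ('c \<Rightarrow> 'k)" where
  "psum y j = - (\<Sum>i<j. y i)"

lemma Z_common: assumes "x \<in> Z a b1" "y \<in> Z a b2" obtains b where "x \<in> Z a b" "y \<in> Z a b"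
proof
  show "x \<in> Z a (max b1 b2)" "y \<in> Z a (max b1 b2)" using assms by (auto intro: Z_mono)
qed

lemma fcycles_add: assumes "x \<in> fcycles a" "y \<in> fcycles a" shows "x + y \<in> fcycles a"
proof -
  obtain b1 b2 where "x \<in> Z a b1" "y \<in> Z a b2" using assms by (auto simp: fcycles_def)
  then obtain b where "x \<in> Z a b" "y \<in> Z a b" by (rule Z_common)
  then show ?thesis using Z_add unfolding fcycles_def by blast
qed

lemma fcycles_diff: assumes "x \<in> fcycles a" "y \<in> fcycles a" shows "x - y \<in> fcycles a"
proof -
  obtain b1 b2 where "x \<in> Z a b1" "y \<in> Z a b2" using assms by (auto simp: fcycles_def)
  then obtain b where "x \<in> Z a b" "y \<in> Z a b" by (rule Z_common)
  then show ?thesis using Z_diff unfolding fcycles_def by blast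
qed

lemma fcycles_uminus: "x \<in> fcycles a \<Longrightarrow> - x \<in> fcycles a"
  unfolding fcycles_def using Z_uminus by blast
lemma fcycles_smul: "x \<in> fcycles a \<Longrightarrow> (\<lambda>c. k * x c) \<in> fcycles a"
  unfolding fcycles_def using Z_smul by blast
lemma fcycles_zero: "0 \<in> fcycles a"
  unfolding fcycles_def using Z_zero by blast
lemma fcycles_pm: "x \<in> fcycles a \<Longrightarrow> a \<le> a' \<Longrightarrow> pm a' x \<in> fcycles a'"
  unfolding fcycles_def using Z_pm by blast
lemma fcycles_bdd: "x \<in> fcycles a \<Longrightarrow> bdd x"
  unfolding fcycles_def cycles_iff using CM_bdd by blast
lemma fcycles_cyc: "x \<in> fcycles a \<Longrightarrow> pm a (D x) = 0"
  unfolding fcycles_def cycles_iff by blast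
lemma fcycles_CM: "x \<in> fcycles a \<Longrightarrow> \<exists>b. x \<in> CM a b"
  unfolding fcycles_def cycles_iff by blast

lemma Seqs_fcycles: "y \<in> Seqs \<Longrightarrow> y i \<in> fcycles (aseq i)" by (simp add: Seqs_def)
lemma Seqs_bdd: "y \<in> Seqs \<Longrightarrow> bdd (y i)" using fcycles_bdd[OF Seqs_fcycles] .

lemma Seqs_add: "y \<in> Seqs \<Longrightarrow> y' \<in> Seqs \<Longrightarrow> y + y' \<in> Seqs" by (simp add: Seqs_def fcycles_add)
lemma Seqs_diff: "y \<in> Seqs \<Longrightarrow> y' \<in> Seqs \<Longrightarrow> y - y' \<in> Seqs" by (simp add: Seqs_def fcycles_diff)
lemma Seqs_uminus: "y \<in> Seqs \<Longrightarrow> - y \<in> Seqs" by (simp add: Seqs_def fcycles_uminus)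
lemma Seqs_smul: "y \<in> Seqs \<Longrightarrow> (\<lambda>j c. k * y j c) \<in> Seqs" by (simp add: Seqs_def fcycles_smul)
lemma Seqs_zero: "0 \<in> Seqs" by (simp add: Seqs_def fcycles_zero)
lemma Seqs_Delta_ch: "g \<in> Seqs \<Longrightarrow> Delta_ch g \<in> Seqs"
  unfolding Seqs_def Delta_ch_def using fcycles_diff fcycles_pm decS by blast

lemma psum_Suc: "psum y (Suc j) = psum y j - y j" by (simp add: psum_def)

lemma psum_CM: assumes "y \<in> Seqs" shows "\<exists>b. psum y j \<in> CM (aseq j) b"
proof (induction j)
  case 0 show ?case using CM_zero by (metis psum_def lessThan_0 sum.empty neg_0_equal_iff_equal)
next
  case (Suc j)
  obtain b where b: "psum y j \<in> CM (aseq j) b" using Suc by blast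
  obtain b' where b': "y j \<in> CM (aseq j) b'" using fcycles_CM[OF Seqs_fcycles[OF assms]] by blast
  have "psum y j - y j \<in> CM (aseq j) (max b b')"
    using CM_mono[OF b] CM_mono[OF b'] by (intro CM_diff) auto
  then show ?case unfolding psum_Suc using CM_mono_low[OF _ decS] by blast
qed

lemma psum_bdd: "y \<in> Seqs \<Longrightarrow> bdd (psum y j)" using psum_CM CM_bdd by blast

lemma trunc_conn: assumes y: "y \<in> Seqs" shows "pm (aseq j) (conn y) = pm (aseq j) (D (psum y j))"
proof
  fix c show "pm (aseq j) (conn y) c = pm (aseq j) (D (psum y j)) c"
  proof (cases "aseq j \<le> f c")
    case True
    have yBA: "bdd (y i)" for i using y fcycles_bdd by (auto simp: Seqs_def)
    have "D (psum y j) = - D (\<Sum>i<j. y i)"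
      unfolding psum_def by (rule D_uminus[OF bdd_sum]) (use yBA in auto)
    also have "D (\<Sum>i<j. y i) = (\<Sum>i<j. D (y i))" by (rule D_sum) (use yBA in auto)
    finally have "D (psum y j) = - (\<Sum>i<j. D (y i))" .
    then have Du: "D (psum y j) c = - (\<Sum>i<j. D (y i) c)" by (simp add: sum_fun_apply)
    have sub: "{i. f c < aseq i} \<subseteq> {..<j}"
    proof
      fix i assume "i \<in> {i. f c < aseq i}"
      then have "f c < aseq i" by simp
      then show "i \<in> {..<j}" using anti[of j i] True by (cases "j \<le> i") auto
    qed
    have "(\<Sum>i<j. D (y i) c) = (\<Sum>i\<in>{i. f c < aseq i}. D (y i) c)"
    proof (rule sum.mono_neutral_right[OF _ sub])
      show "finite {..<j}" by simp
      show "\<forall>i\<in>{..<j} - {i. f c < aseq i}. D (y i) c = 0"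
      proof
        fix i assume "i \<in> {..<j} - {i. f c < aseq i}"
        then have "aseq i \<le> f c" by auto
        moreover have "pm (aseq i) (D (y i)) = 0" using y fcycles_cyc by (auto simp: Seqs_def)
        ultimately show "D (y i) c = 0" using fun_cong[of "pm (aseq i) (D (y i))" 0 c] unfolding pmap_def by simp
      qed
    qed
    then show ?thesis using True Du by (simp add: pmap_def conn_def)
  qed (simp add: pmap_def)
qed

lemma conn_gcycles: assumes y: "y \<in> Seqs" shows "conn y \<in> gcycles (aseq 0)"
proof -
  have below: "conn y \<in> Below (aseq 0)"
  proof -
    have "c \<in> C \<and> f c \<le> aseq 0" if "conn y c \<noteq> 0" for c
    proof -
      have "(\<Sum>i\<in>{i. f c < aseq i}. D (y i) c) \<noteq> 0" using that by (simp add: conn_def)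
      then have "\<exists>i\<in>{i. f c < aseq i}. D (y i) c \<noteq> 0"
        by (rule contrapos_np) (simp add: sum.neutral)
      then obtain i where i: "f c < aseq i" "D (y i) c \<noteq> 0" by blast
      then show ?thesis using D_notC anti[of 0 i] by fastforce
    qed
    then show ?thesis by (auto simp: bchains_def)
  qed
  have "D (conn y) = 0"
  proof
    fix c obtain j where j: "aseq j \<le> f c" using unb by blast
    have "D (conn y) c = D (pm (aseq j) (conn y)) c" using D_pm_at[OF Below_bdd[OF below] j] by simp
    also have "\<dots> = D (pm (aseq j) (D (psum y j))) c" using trunc_conn[OF y] by simp
    also have "\<dots> = D (D (psum y j)) c" using D_pm_at[OF bdd_D[OF psum_bdd[OF y]] j] .
    also have "\<dots> = 0" using DD[OF psum_bdd[OF y]] by simp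
    finally show "D (conn y) c = 0 c" by simp
  qed
  then show ?thesis using below by (simp add: gcycles_def)
qed

lemma conn_add: assumes "y \<in> Seqs" "y' \<in> Seqs" shows "conn (y + y') = conn y + conn y'"
proof -
  have "D (y i + y' i) = D (y i) + D (y' i)" for i
    using D_add[OF Seqs_bdd[OF assms(1)] Seqs_bdd[OF assms(2)]] .
  then show ?thesis by (auto simp: conn_def fun_eq_iff sum.distrib)
qed

lemma conn_smul: assumes "y \<in> Seqs" shows "conn (\<lambda>j c. k * y j c) = (\<lambda>c. k * conn y c)"
proof -
  have "D (\<lambda>c. k * y i c) = (\<lambda>c. k * D (y i) c)" for i
    using D_smul[OF Seqs_bdd[OF assms(1)]] .
  then show ?thesis by (auto simp: conn_def fun_eq_iff sum_distrib_left)
qed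

lemma conn_diff: assumes "y \<in> Seqs" "y' \<in> Seqs" shows "conn (y - y') = conn y - conn y'"
proof -
  have "D (y i - y' i) = D (y i) - D (y' i)" for i
    using D_diff[OF Seqs_bdd[OF assms(1)] Seqs_bdd[OF assms(2)]] .
  then show ?thesis by (auto simp: conn_def fun_eq_iff sum_subtractf)
qed

lemma telesc: "(\<Sum>i<j. Delta_ch g i) = g 0 - g j + (\<Sum>i<j. tail (aseq i) (g (Suc i)))"
proof -
  have "Delta_ch g i = (g i - g (Suc i)) + tail (aseq i) (g (Suc i))" for i by (simp add: Delta_ch_def tail_def)
  then have "(\<Sum>i<j. Delta_ch g i) = (\<Sum>i<j. g i - g (Suc i)) + (\<Sum>i<j. tail (aseq i) (g (Suc i)))"
    by (simp add: sum.distrib)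
  moreover have "(\<Sum>i<j. g i - g (Suc i)) = g 0 - g j"
    using sum_lessThan_telescope'[of g j] by simp
  ultimately show ?thesis by simp
qed

lemma tails_Below:
  assumes u: "\<And>i. bdd (u i)" and b: "aseq 0 \<le> b"
  shows "(\<Sum>i<j. tail (aseq i) (u i)) \<in> Below b"
proof (rule bchains_sum)
  show "tail (aseq i) (u i) \<in> Below b" for i using tail_Below[OF u] anti[of 0 i] b by simp
qed simp

lemma choose_primitives:
  assumes "\<And>j. \<exists>b. x j \<in> B (aseq j) b"
  obtains w where "\<And>j. \<exists>b. w j \<in> CM (aseq j) b" "\<And>j. x j = pm (aseq j) (D (w j))"
proof -
  have "\<forall>j. \<exists>w. (\<exists>b. w \<in> CM (aseq j) b) \<and> x j = pm (aseq j) (D w)"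
    using assms unfolding bdries_iff by blast
  then obtain w where "\<forall>j. (\<exists>b. w j \<in> CM (aseq j) b) \<and> x j = pm (aseq j) (D (w j))"
    by (rule choice[THEN exE])
  then show ?thesis using that by blast
qed

(* If all truncations of conn d are boundaries, then d lies in the image of Delta_ch:
   lift the boundaries to a single primitive w and correct the partial sums by it. *)
lemma conn_bdry_exact: assumes d: "d \<in> Seqs" and zB: "\<And>a. pm a (conn d) \<in> B a e"
  shows "\<exists>g \<in> Seqs. \<forall>j. d j = Delta_ch g j"
proof -
  obtain w where w: "w \<in> Below e" "\<And>n. pm (aseq n) (D w) = pm (aseq n) (conn d)"
    using lift_boundary[of "conn d" e] zB by blast
  define g where "g j = psum d j - pm (aseq j) w" for j
  have gZ: "g j \<in> Z (aseq j) (max b e)" if "psum d j \<in> CM (aseq j) b" for j b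
  proof -
    have c1: "psum d j \<in> CM (aseq j) (max b e)" using CM_mono[OF that] by simp
    have c2: "pm (aseq j) w \<in> CM (aseq j) (max b e)" using CM_mono[OF pm_CM[OF w(1)]] by simp
    have "pm (aseq j) (D (g j)) = pm (aseq j) (D (psum d j)) - pm (aseq j) (D (pm (aseq j) w))"
      unfolding g_def using D_diff[OF CM_bdd[OF c1] CM_bdd[OF c2]] by (simp add: pm_diff)
    also have "\<dots> = 0" using trunc_conn[OF d] D_pm[OF Below_bdd[OF w(1)]] w(2) by simp
    finally show ?thesis using CM_diff[OF c1 c2] unfolding g_def cycles_iff by simp
  qed
  have "g \<in> Seqs" unfolding Seqs_def fcycles_def using gZ psum_CM[OF d] by blast
  moreover have "d j = Delta_ch g j" for j
  proof -
    obtain b where b: "psum d j \<in> CM (aseq j) b" using psum_CM[OF d] by blast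
    obtain b' where b': "d j \<in> CM (aseq j) b'" using fcycles_CM[OF Seqs_fcycles[OF d]] by blast
    have "Delta_ch g j = psum d j - pm (aseq j) (psum d (Suc j))"
      using pm_pm[OF decS[of j]] by (simp add: Delta_ch_def g_def pm_diff)
    also have "\<dots> = d j" using pm_id[OF b] pm_id[OF b'] by (simp add: psum_Suc pm_diff)
    finally show ?thesis by simp
  qed
  ultimately show ?thesis by blast
qed

lemma psum_Delta_plus:
  assumes "\<And>i. d i = Delta_ch g i + pm (aseq i) (D (e i))"
  shows "psum d j = ((\<Sum>i<j. tail (aseq i) (D (e i))) - (\<Sum>i<j. tail (aseq i) (g (Suc i))) - g 0)
    + g j - (\<Sum>i<j. D (e i))"
proof -
  define S Q R where "S = (\<Sum>i<j. D (e i))" and "Q = (\<Sum>i<j. tail (aseq i) (D (e i)))"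
    and "R = (\<Sum>i<j. tail (aseq i) (g (Suc i)))"
  have "(\<Sum>i<j. d i) = (\<Sum>i<j. Delta_ch g i) + (\<Sum>i<j. pm (aseq i) (D (e i)))"
    using assms by (simp add: sum.distrib)
  also have "(\<Sum>i<j. pm (aseq i) (D (e i))) = S - Q"
    unfolding S_def Q_def tail_def by (simp add: sum_subtractf)
  finally have "(\<Sum>i<j. d i) = g 0 - g j + R + (S - Q)" unfolding telesc R_def .
  then show ?thesis unfolding psum_def S_def[symmetric] Q_def[symmetric] R_def[symmetric]
    by (simp add: algebra_simps)
qed

(* Conversely, if d agrees with some Delta_ch g up to boundaries, then all truncations of
   conn d are boundaries of one common level: telescoping expresses each partial sum of d,
   up to cycles, by chains bounded above uniformly in j. *)
lemma conn_bdry_of_Delta: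
  assumes d: "d \<in> Seqs" and g: "g \<in> Seqs" and dg: "\<And>j. \<exists>b. d j - Delta_ch g j \<in> B (aseq j) b"
  shows "\<exists>E. \<forall>a. pm a (conn d) \<in> B a E"
proof -
  obtain ee where ee_CM: "\<And>j. \<exists>b. ee j \<in> CM (aseq j) b"
    and ee: "\<And>j. d j - Delta_ch g j = pm (aseq j) (D (ee j))"
    using choose_primitives[OF dg] by blast
  have eeB: "bdd (ee j)" for j using ee_CM CM_bdd by blast
  have gB: "bdd (g i)" for i by (rule Seqs_bdd[OF g])
  obtain b0 where b0: "g 0 \<in> Below b0" using gB[of 0] by (auto simp: bdd_def)
  define E where "E = max b0 (aseq 0)"
  define S where "S j = (\<Sum>i<j. D (ee i))" for j
  define v where "v j = (\<Sum>i<j. tail (aseq i) (D (ee i))) - (\<Sum>i<j. tail (aseq i) (g (Suc i))) - g 0" for j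
  have vN: "v j \<in> Below E" for j
  proof -
    have "aseq 0 \<le> E" "b0 \<le> E" by (simp_all add: E_def)
    then show ?thesis unfolding v_def
      using tails_Below[of "\<lambda>i. D (ee i)" E j] tails_Below[of "\<lambda>i. g (Suc i)" E j] bdd_D[OF eeB] gB
        bchains_mono[OF b0]
      by (intro bchains_diff) auto
  qed
  have SB: "bdd (S j)" for j unfolding S_def using bdd_D[OF eeB] by (intro bdd_sum) auto
  have DS: "D (S j) = 0" for j
  proof -
    have "D (S j) = (\<Sum>i<j. D (D (ee i)))" unfolding S_def by (rule D_sum) (auto intro: bdd_D eeB)
    then show ?thesis using DD[OF eeB] by simp
  qed
  have "d i = Delta_ch g i + pm (aseq i) (D (ee i))" for i using ee[of i] by (simp add: algebra_simps)
  then have psum_eq: "psum d j = v j + g j - S j" for j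
    unfolding v_def S_def by (rule psum_Delta_plus)
  have "pm (aseq j) (conn d) = pm (aseq j) (D (v j))" for j
  proof -
    have vB: "bdd (v j)" using vN by (rule Below_bdd)
    have "D (psum d j) = D (v j) + D (g j) - D (S j)"
      unfolding psum_eq using D_diff[OF bdd_add[OF vB gB] SB] D_add[OF vB gB] by simp
    then have "pm (aseq j) (D (psum d j)) = pm (aseq j) (D (v j)) + pm (aseq j) (D (g j))"
      using DS by (simp add: pm_add)
    moreover have "pm (aseq j) (D (g j)) = 0" using fcycles_cyc[OF Seqs_fcycles[OF g]] .
    ultimately show ?thesis using trunc_conn[OF d] by simp
  qed
  then have "\<forall>a. pm a (conn d) \<in> B a E"
    using vN unb by (blast intro: trunc_bdry_of_lifts[where s=aseq])
  then show ?thesis by blast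
qed

lemma Delta_ch_of_primitives:
  assumes w: "\<And>j. \<exists>b. w j \<in> CM (aseq j) b" and prim: "\<And>j. pm (aseq j) z = pm (aseq j) (D (w j))"
  shows "Delta_ch w \<in> Seqs"
  unfolding Seqs_def fcycles_def mem_Collect_eq
proof (intro allI)
  fix j
  obtain e1 where e1: "w j \<in> CM (aseq j) e1" using w by blast
  obtain e2 where e2: "w (Suc j) \<in> CM (aseq (Suc j)) e2" using w by blast
  have c1: "w j \<in> CM (aseq j) (max e1 e2)" using CM_mono[OF e1] by simp
  have c2: "pm (aseq j) (w (Suc j)) \<in> CM (aseq j) (max e1 e2)" using CM_mono[OF pm_CM2[OF e2]] by simp
  have next_level: "pm (aseq j) (D (w (Suc j))) = pm (aseq j) z"
    using prim[of "Suc j"] pm_pm[OF decS[of j]] by metis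
  have "pm (aseq j) (D (Delta_ch w j)) = pm (aseq j) (D (w j)) - pm (aseq j) (D (pm (aseq j) (w (Suc j))))"
    unfolding Delta_ch_def using D_diff[OF CM_bdd[OF c1] CM_bdd[OF c2]] by (simp add: pm_diff)
  also have "\<dots> = 0" using prim[of j] D_pm[OF CM_bdd[OF e2]] next_level by simp
  finally show "\<exists>b. Delta_ch w j \<in> Z (aseq j) b"
    using CM_diff[OF c1 c2] unfolding Delta_ch_def cycles_iff by blast
qed

lemma conn_surj: assumes z: "z \<in> gcycles b" and zB: "\<And>a. \<exists>e. pm a z \<in> B a e"
  shows "\<exists>y \<in> Seqs. \<exists>E. \<forall>a. pm a (z - conn y) \<in> B a E"
proof -
  obtain w where w: "\<And>j. \<exists>e. w j \<in> CM (aseq j) e" "\<And>j. pm (aseq j) z = pm (aseq j) (D (w j))"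
    using choose_primitives[of "\<lambda>j. pm (aseq j) z"] zB by blast
  have wB: "bdd (w j)" for j using w(1)[of j] CM_bdd by blast
  define y where "y = Delta_ch w"
  have y: "y \<in> Seqs" unfolding y_def using Delta_ch_of_primitives[OF w] .
  obtain e0 where e0: "w 0 \<in> CM (aseq 0) e0" using w(1) by blast
  define E where "E = max e0 (aseq 0)"
  define v where "v j = w 0 + (\<Sum>i<j. tail (aseq i) (w (Suc i)))" for j
  have vN: "v j \<in> Below E" for j
  proof -
    have "aseq 0 \<le> E" "e0 \<le> E" by (simp_all add: E_def)
    then show ?thesis unfolding v_def
      using tails_Below[of "\<lambda>i. w (Suc i)" E j] wB bchains_mono[OF CM_bchains[OF e0]]
      by (intro bchains_add) auto
  qed
  have psum_eq: "psum y j = w j - v j" for j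
    unfolding psum_def y_def telesc v_def by (simp add: algebra_simps)
  have "pm (aseq j) (z - conn y) = pm (aseq j) (D (v j))" for j
    using trunc_conn[OF y] psum_eq D_diff[OF wB Below_bdd[OF vN]] w(2)[of j] by (simp add: pm_diff)
  then have "\<forall>a. pm a (z - conn y) \<in> B a E"
    using vN unb by (blast intro: trunc_bdry_of_lifts[where s=aseq])
  then show ?thesis using y by blast
qed

(* The class in G_a of a cycle of CM_a^b for an unspecified b; it does not depend on the
   choice of b.  These classes are linear and compatible with the maps piG. *)
definition gcl_any :: "real \<Rightarrow> ('c \<Rightarrow> 'k) \<Rightarrow> (real \<times> ('c \<Rightarrow> 'k) set) set" where
  "gcl_any a x = gclass a (SOME b. x \<in> Z a b) x"

lemma gcl_any_eq: assumes "x \<in> Z a b" shows "gcl_any a x = gclass a b x"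
proof -
  have x0: "x \<in> Z a (SOME b. x \<in> Z a b)" using someI[of "\<lambda>b. x \<in> Z a b"] assms by blast
  define s0 where "s0 = (SOME b. x \<in> Z a b)"
  have m1: "gclass a (max b s0) x = gclass a s0 x" by (rule gclass_mono[OF x0[folded s0_def]]) simp
  have m2: "gclass a (max b s0) x = gclass a b x" by (rule gclass_mono[OF assms]) simp
  show ?thesis unfolding gcl_any_def s0_def[symmetric] using m1 m2 by simp
qed

lemma fcycles_Z: "x \<in> fcycles a \<Longrightarrow> \<exists>b. x \<in> Z a b" by (simp add: fcycles_def)

lemma gcl_any_carr: assumes "x \<in> fcycles a" shows "gcl_any a x \<in> vcarr (GS a)"
proof -
  obtain b where b: "x \<in> Z a b" using fcycles_Z[OF assms] by blast
  show ?thesis unfolding gcl_any_eq[OF b] by (rule gclass_carr[OF b])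
qed

lemma gcl_any_add: assumes "x \<in> fcycles a" "x' \<in> fcycles a" shows "vadd (GS a) (gcl_any a x) (gcl_any a x') = gcl_any a (x + x')"
proof -
  obtain b b' where b: "x \<in> Z a b" and b': "x' \<in> Z a b'" using assms fcycles_Z by blast
  have s: "x + x' \<in> Z a (max b b')" using Z_mono[OF b] Z_mono[OF b'] by (intro Z_add) auto
  show ?thesis using gclass_add[OF b b'] unfolding gcl_any_eq[OF b] gcl_any_eq[OF b'] gcl_any_eq[OF s] .
qed

lemma gcl_any_smul: assumes "x \<in> fcycles a" shows "vsmul (GS a) k (gcl_any a x) = gcl_any a (\<lambda>c. k * x c)"
proof -
  obtain b where b: "x \<in> Z a b" using assms fcycles_Z by blast
  show ?thesis unfolding gcl_any_eq[OF b] gcl_any_eq[OF Z_smul[OF b]] by (rule gclass_smul[OF b])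
qed

lemma gcl_any_iff: assumes "x \<in> fcycles a" "x' \<in> fcycles a" shows "gcl_any a x = gcl_any a x' \<longleftrightarrow> (\<exists>b. x - x' \<in> B a b)"
proof -
  obtain b b' where b: "x' \<in> Z a b" and b': "x \<in> Z a b'" using assms fcycles_Z by blast
  show ?thesis unfolding gcl_any_eq[OF b] gcl_any_eq[OF b'] by (rule gclass_eq[OF b b'])
qed

lemma gcl_any_pi: assumes "x \<in> fcycles a1" "a1 \<le> a2" shows "piG C f m a2 a1 (gcl_any a1 x) = gcl_any a2 (pm a2 x)"
proof -
  obtain b where b: "x \<in> Z a1 b" using assms fcycles_Z by blast
  show ?thesis unfolding gcl_any_eq[OF b] gcl_any_eq[OF Z_pm[OF b assms(2)]] by (rule piG_gclass[OF assms(2) b])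
qed

abbreviation "PG \<equiv> prodv (\<lambda>j. GS (aseq j))"

definition Gfam :: "(nat \<Rightarrow> 'c \<Rightarrow> 'k) \<Rightarrow> nat \<Rightarrow> (real \<times> ('c \<Rightarrow> 'k) set) set" where
  "Gfam y = (\<lambda>j. gcl_any (aseq j) (y j))"

lemma PG_carr: "vcarr PG = {X. \<forall>j. X j \<in> vcarr (GS (aseq j))}" by (simp add: prodv_def)
lemma PG_add: "vadd PG X Y = (\<lambda>j. vadd (GS (aseq j)) (X j) (Y j))" by (simp add: prodv_def)
lemma PG_smul: "vsmul PG k X = (\<lambda>j. vsmul (GS (aseq j)) k (X j))" by (simp add: prodv_def)

lemma Gfam_carr: "y \<in> Seqs \<Longrightarrow> Gfam y \<in> vcarr PG"
  unfolding PG_carr Gfam_def using gcl_any_carr Seqs_fcycles by blast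

lemma PG_Gfam: assumes "X \<in> vcarr PG" shows "\<exists>y \<in> Seqs. X = Gfam y"
proof -
  have "\<forall>j. \<exists>x. x \<in> fcycles (aseq j) \<and> X j = gcl_any (aseq j) x"
  proof
    fix j have "X j \<in> vcarr (GS (aseq j))" using assms PG_carr by blast
    then obtain b z where "z \<in> Z (aseq j) b" "X j = gclass (aseq j) b z" unfolding GS_carr by blast
    then show "\<exists>x. x \<in> fcycles (aseq j) \<and> X j = gcl_any (aseq j) x" using gcl_any_eq fcycles_def by blast
  qed
  then obtain y where "\<And>j. y j \<in> fcycles (aseq j) \<and> X j = gcl_any (aseq j) (y j)" by metis
  then show ?thesis unfolding Seqs_def Gfam_def by auto
qed

lemma Gfam_add: "y \<in> Seqs \<Longrightarrow> y' \<in> Seqs \<Longrightarrow> vadd PG (Gfam y) (Gfam y') = Gfam (y + y')"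
  unfolding PG_add Gfam_def using gcl_any_add Seqs_fcycles by simp

abbreviation sm :: "'k \<Rightarrow> (nat \<Rightarrow> 'c \<Rightarrow> 'k) \<Rightarrow> (nat \<Rightarrow> 'c \<Rightarrow> 'k)" where
  "sm k y \<equiv> (\<lambda>j c. k * y j c)"

lemma Gfam_smul: "y \<in> Seqs \<Longrightarrow> vsmul PG k (Gfam y) = Gfam (sm k y)"
  unfolding PG_smul Gfam_def using gcl_any_smul Seqs_fcycles by simp

lemma Delta_Gfam: assumes g: "g \<in> Seqs" shows "Delta C f m aseq (Gfam g) = Gfam (Delta_ch g)"
proof
  fix j
  have f1: "g (Suc j) \<in> fcycles (aseq (Suc j))" using Seqs_fcycles[OF g] .
  have f2: "pm (aseq j) (g (Suc j)) \<in> fcycles (aseq j)" using fcycles_pm[OF f1 decS] .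
  have f3: "g j \<in> fcycles (aseq j)" using Seqs_fcycles[OF g] .
  have "Delta C f m aseq (Gfam g) j = vadd (GS (aseq j)) (gcl_any (aseq j) (g j))
      (vsmul (GS (aseq j)) (-1) (gcl_any (aseq j) (pm (aseq j) (g (Suc j)))))"
    unfolding Delta_def Gfam_def using gcl_any_pi[OF f1 decS] by simp
  also have "\<dots> = gcl_any (aseq j) (g j + (\<lambda>c. (-1) * pm (aseq j) (g (Suc j)) c))"
    using gcl_any_smul[OF f2, of "-1"] gcl_any_add[OF f3 fcycles_smul[OF f2, of "-1"]] by simp
  also have "g j + (\<lambda>c. (-1) * pm (aseq j) (g (Suc j)) c) = Delta_ch g j"
    by (simp add: Delta_ch_def fun_eq_iff)
  finally show "Delta C f m aseq (Gfam g) j = Gfam (Delta_ch g) j" by (simp add: Gfam_def)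
qed

lemma Gfam_iff: assumes "y \<in> Seqs" "y' \<in> Seqs"
  shows "Gfam y = Gfam y' \<longleftrightarrow> (\<forall>j. \<exists>b. y j - y' j \<in> B (aseq j) b)"
  unfolding Gfam_def fun_eq_iff using gcl_any_iff[OF Seqs_fcycles[OF assms(1)] Seqs_fcycles[OF assms(2)]] by blast

abbreviation "ImDelta \<equiv> Delta C f m aseq ` vcarr PG"

definition dcoset :: "(nat \<Rightarrow> (real \<times> ('c \<Rightarrow> 'k) set) set) \<Rightarrow> (nat \<Rightarrow> (real \<times> ('c \<Rightarrow> 'k) set) set) set" where
  "dcoset X = {vadd PG X w | w. w \<in> ImDelta}"

lemma Delta_ch_add: "Delta_ch (g + g') = Delta_ch g + Delta_ch g'" by (simp add: Delta_ch_def fun_eq_iff pmap_def)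
lemma Delta_ch_smul: "Delta_ch (sm k g) = sm k (Delta_ch g)" by (simp add: Delta_ch_def fun_eq_iff pmap_def algebra_simps)
lemma Delta_ch_zero: "Delta_ch 0 = 0" by (simp add: Delta_ch_def fun_eq_iff pmap_def)
lemma Delta_ch_uminus: "Delta_ch (- g) = - Delta_ch g" by (simp add: Delta_ch_def fun_eq_iff pmap_def)

(* Parameters identified in both ker kappa and lim^1: y - y' agrees, up to boundaries at
   each level, with Delta_ch g for some g. *)
definition Delta_equiv :: "(nat \<Rightarrow> 'c \<Rightarrow> 'k) \<Rightarrow> (nat \<Rightarrow> 'c \<Rightarrow> 'k) \<Rightarrow> bool" where
  "Delta_equiv y y' \<longleftrightarrow> (\<exists>g \<in> Seqs. \<forall>j. \<exists>b. (y - y') j - Delta_ch g j \<in> B (aseq j) b)"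

lemma dcoset_Gfam: assumes y: "y \<in> Seqs" shows "dcoset (Gfam y) = {Gfam (y + Delta_ch g) | g. g \<in> Seqs}"
proof (intro equalityI subsetI)
  fix u assume "u \<in> dcoset (Gfam y)"
  then obtain X where X: "X \<in> vcarr PG" "u = vadd PG (Gfam y) (Delta C f m aseq X)" unfolding dcoset_def by blast
  obtain g where g: "g \<in> Seqs" "X = Gfam g" using PG_Gfam[OF X(1)] by blast
  have "u = Gfam (y + Delta_ch g)" using X(2) g Delta_Gfam[OF g(1)] Gfam_add[OF y Seqs_Delta_ch[OF g(1)]] by simp
  then show "u \<in> {Gfam (y + Delta_ch g) | g. g \<in> Seqs}" using g(1) by blast
next
  fix u assume "u \<in> {Gfam (y + Delta_ch g) | g. g \<in> Seqs}"
  then obtain g where g: "g \<in> Seqs" "u = Gfam (y + Delta_ch g)" by blast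
  have "u = vadd PG (Gfam y) (Delta C f m aseq (Gfam g))"
    using g Delta_Gfam[OF g(1)] Gfam_add[OF y Seqs_Delta_ch[OF g(1)]] by simp
  then show "u \<in> dcoset (Gfam y)" unfolding dcoset_def using Gfam_carr[OF g(1)] by blast
qed

abbreviation "LIMv \<equiv> lim1 C f m aseq"

definition lim1_param :: "(nat \<Rightarrow> 'c \<Rightarrow> 'k) \<Rightarrow> (nat \<Rightarrow> (real \<times> ('c \<Rightarrow> 'k) set) set) set" where
  "lim1_param y = dcoset (Gfam y)"

lemma LIM_carr: "vcarr LIMv = dcoset ` vcarr PG"
  by (simp add: lim1_def quotv_def dcoset_def)

lemma lim1_param_im: "lim1_param ` Seqs = vcarr LIMv"
proof -
  have "vcarr PG = Gfam ` Seqs" using Gfam_carr PG_Gfam by blast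
  then show ?thesis unfolding LIM_carr lim1_param_def by (simp add: image_image)
qed

lemma lim1_param_add: assumes y: "y \<in> Seqs" and y': "y' \<in> Seqs"
  shows "vadd LIMv (lim1_param y) (lim1_param y') = lim1_param (y + y')"
proof -
  have "vadd LIMv (lim1_param y) (lim1_param y') = {vadd PG u u' | u u'. u \<in> dcoset (Gfam y) \<and> u' \<in> dcoset (Gfam y')}"
    by (simp add: lim1_def quotv_def lim1_param_def)
  also have "\<dots> = dcoset (Gfam (y + y'))"
  proof (intro equalityI subsetI)
    fix t assume "t \<in> {vadd PG u u' | u u'. u \<in> dcoset (Gfam y) \<and> u' \<in> dcoset (Gfam y')}"
    then obtain g g' where g: "g \<in> Seqs" "g' \<in> Seqs" "t = vadd PG (Gfam (y + Delta_ch g)) (Gfam (y' + Delta_ch g'))"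
      unfolding dcoset_Gfam[OF y] dcoset_Gfam[OF y'] by blast
    have "t = Gfam (y + y' + Delta_ch (g + g'))"
      using g Gfam_add[OF Seqs_add[OF y Seqs_Delta_ch[OF g(1)]] Seqs_add[OF y' Seqs_Delta_ch[OF g(2)]]]
      by (simp add: Delta_ch_add algebra_simps)
    then show "t \<in> dcoset (Gfam (y + y'))" unfolding dcoset_Gfam[OF Seqs_add[OF y y']] using Seqs_add[OF g(1,2)] by blast
  next
    fix t assume "t \<in> dcoset (Gfam (y + y'))"
    then obtain g where g: "g \<in> Seqs" "t = Gfam (y + y' + Delta_ch g)" unfolding dcoset_Gfam[OF Seqs_add[OF y y']] by blast
    have "t = vadd PG (Gfam (y + Delta_ch g)) (Gfam (y' + Delta_ch 0))"
      using g Gfam_add[OF Seqs_add[OF y Seqs_Delta_ch[OF g(1)]] Seqs_add[OF y' Seqs_Delta_ch[OF Seqs_zero]]]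
      by (simp add: Delta_ch_zero algebra_simps)
    moreover have "Gfam (y + Delta_ch g) \<in> dcoset (Gfam y)" "Gfam (y' + Delta_ch 0) \<in> dcoset (Gfam y')"
      unfolding dcoset_Gfam[OF y] dcoset_Gfam[OF y'] using g(1) Seqs_zero by blast+
    ultimately show "t \<in> {vadd PG u u' | u u'. u \<in> dcoset (Gfam y) \<and> u' \<in> dcoset (Gfam y')}" by blast
  qed
  finally show ?thesis unfolding lim1_param_def .
qed

lemma lim1_param_smul: assumes y: "y \<in> Seqs"
  shows "vsmul LIMv k (lim1_param y) = lim1_param (sm k y)"
proof -
  have "vsmul LIMv k (lim1_param y) = {vadd PG (vsmul PG k u) w | u w. u \<in> dcoset (Gfam y) \<and> w \<in> ImDelta}"
    by (simp add: lim1_def quotv_def lim1_param_def)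
  also have "\<dots> = dcoset (Gfam (sm k y))"
  proof (intro equalityI subsetI)
    fix t assume "t \<in> {vadd PG (vsmul PG k u) w | u w. u \<in> dcoset (Gfam y) \<and> w \<in> ImDelta}"
    then obtain g X where g: "g \<in> Seqs" "X \<in> vcarr PG" "t = vadd PG (vsmul PG k (Gfam (y + Delta_ch g))) (Delta C f m aseq X)"
      unfolding dcoset_Gfam[OF y] by blast
    obtain h where h: "h \<in> Seqs" "X = Gfam h" using PG_Gfam[OF g(2)] by blast
    have yg: "y + Delta_ch g \<in> Seqs" using Seqs_add[OF y Seqs_Delta_ch[OF g(1)]] .
    have "t = Gfam (sm k (y + Delta_ch g) + Delta_ch h)"
      using g(3) h Gfam_smul[OF yg] Delta_Gfam[OF h(1)] Gfam_add[OF Seqs_smul[OF yg] Seqs_Delta_ch[OF h(1)]] by simp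
    also have "sm k (y + Delta_ch g) + Delta_ch h = sm k y + Delta_ch (sm k g + h)"
      by (simp add: Delta_ch_add Delta_ch_smul fun_eq_iff algebra_simps)
    finally show "t \<in> dcoset (Gfam (sm k y))" unfolding dcoset_Gfam[OF Seqs_smul[OF y]]
      using Seqs_add[OF Seqs_smul[OF g(1)] h(1)] by blast
  next
    fix t assume "t \<in> dcoset (Gfam (sm k y))"
    then obtain h where h: "h \<in> Seqs" "t = Gfam (sm k y + Delta_ch h)" unfolding dcoset_Gfam[OF Seqs_smul[OF y]] by blast
    have y0: "y + Delta_ch 0 \<in> Seqs" using Seqs_add[OF y Seqs_Delta_ch[OF Seqs_zero]] .
    have "t = vadd PG (vsmul PG k (Gfam (y + Delta_ch 0))) (Delta C f m aseq (Gfam h))"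
      using h Gfam_smul[OF y0] Delta_Gfam[OF h(1)] Gfam_add[OF Seqs_smul[OF y0] Seqs_Delta_ch[OF h(1)]] by (simp add: Delta_ch_zero)
    moreover have "Gfam (y + Delta_ch 0) \<in> dcoset (Gfam y)" unfolding dcoset_Gfam[OF y] using Seqs_zero by blast
    moreover have "Delta C f m aseq (Gfam h) \<in> ImDelta" using Gfam_carr[OF h(1)] by blast
    ultimately show "t \<in> {vadd PG (vsmul PG k u) w | u w. u \<in> dcoset (Gfam y) \<and> w \<in> ImDelta}" by blast
  qed
  finally show ?thesis unfolding lim1_param_def .
qed

lemma lim1_param_eq_iff: assumes y: "y \<in> Seqs" and y': "y' \<in> Seqs"
  shows "lim1_param y = lim1_param y' \<longleftrightarrow> (\<exists>g \<in> Seqs. Gfam y' = Gfam (y + Delta_ch g))"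
proof
  assume eq: "lim1_param y = lim1_param y'"
  have "Gfam (y' + Delta_ch 0) \<in> lim1_param y'"
    unfolding lim1_param_def dcoset_Gfam[OF y'] using Seqs_zero by blast
  then have "Gfam (y' + Delta_ch 0) \<in> lim1_param y" using eq by simp
  then obtain g where "g \<in> Seqs" "Gfam (y' + Delta_ch 0) = Gfam (y + Delta_ch g)"
    unfolding lim1_param_def dcoset_Gfam[OF y] by blast
  then show "\<exists>g \<in> Seqs. Gfam y' = Gfam (y + Delta_ch g)" by (auto simp: Delta_ch_zero)
next
  assume "\<exists>g \<in> Seqs. Gfam y' = Gfam (y + Delta_ch g)"
  then obtain g0 where g0: "g0 \<in> Seqs" "Gfam y' = Gfam (y + Delta_ch g0)" by blast
  have shift: "Gfam (y' + Delta_ch g) = Gfam (y + Delta_ch (g0 + g))" if g: "g \<in> Seqs" for g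
  proof -
    have "Gfam (y' + Delta_ch g) = vadd PG (Gfam (y + Delta_ch g0)) (Gfam (Delta_ch g))"
      using Gfam_add[OF y' Seqs_Delta_ch[OF g]] g0(2) by simp
    also have "\<dots> = Gfam (y + Delta_ch (g0 + g))"
      using Gfam_add[OF Seqs_add[OF y Seqs_Delta_ch[OF g0(1)]] Seqs_Delta_ch[OF g]]
      by (simp add: Delta_ch_add add.assoc)
    finally show ?thesis .
  qed
  show "lim1_param y = lim1_param y'"
    unfolding lim1_param_def dcoset_Gfam[OF y] dcoset_Gfam[OF y']
  proof (intro equalityI subsetI)
    fix t assume "t \<in> {Gfam (y + Delta_ch g) | g. g \<in> Seqs}"
    then obtain g where g: "g \<in> Seqs" "t = Gfam (y + Delta_ch g)" by blast
    then have "t = Gfam (y' + Delta_ch (g - g0))" using shift[OF Seqs_diff[OF g(1) g0(1)]] by simp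
    then show "t \<in> {Gfam (y' + Delta_ch g) | g. g \<in> Seqs}" using Seqs_diff[OF g(1) g0(1)] by blast
  next
    fix t assume "t \<in> {Gfam (y' + Delta_ch g) | g. g \<in> Seqs}"
    then show "t \<in> {Gfam (y + Delta_ch g) | g. g \<in> Seqs}" using shift Seqs_add[OF g0(1)] by blast
  qed
qed

lemma lim1_param_fib: assumes y: "y \<in> Seqs" and y': "y' \<in> Seqs"
  shows "lim1_param y = lim1_param y' \<longleftrightarrow> Delta_equiv y y'"
proof -
  have key: "Gfam y' = Gfam (y + Delta_ch g) \<longleftrightarrow> (\<forall>j. \<exists>b. (y - y') j - Delta_ch (- g) j \<in> B (aseq j) b)"
    if g: "g \<in> Seqs" for g
  proof -
    have "(y - y') j - Delta_ch (- g) j = - ((y' - (y + Delta_ch g)) j)" for j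
      by (simp add: Delta_ch_uminus)
    then show ?thesis
      unfolding Gfam_iff[OF y' Seqs_add[OF y Seqs_Delta_ch[OF g]]] by (simp only: B_uminus_iff minus_apply)
  qed
  show ?thesis
  proof
    assume "lim1_param y = lim1_param y'"
    then obtain g where "g \<in> Seqs" "Gfam y' = Gfam (y + Delta_ch g)"
      using lim1_param_eq_iff[OF y y'] by blast
    then show "Delta_equiv y y'" unfolding Delta_equiv_def using key Seqs_uminus by blast
  next
    assume "Delta_equiv y y'"
    then obtain g where g: "g \<in> Seqs" "\<forall>j. \<exists>b. (y - y') j - Delta_ch g j \<in> B (aseq j) b"
      unfolding Delta_equiv_def by blast
    then have "Gfam y' = Gfam (y + Delta_ch (- g))" using key[OF Seqs_uminus[OF g(1)]] by simp
    then show "lim1_param y = lim1_param y'"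
      using lim1_param_eq_iff[OF y y'] Seqs_uminus[OF g(1)] by blast
  qed
qed

abbreviation "KK \<equiv> kerkappa C f m"

definition ker_param :: "(nat \<Rightarrow> 'c \<Rightarrow> 'k) \<Rightarrow> (real \<times> (real \<Rightarrow> ('c \<Rightarrow> 'k) set)) set" where
  "ker_param y = oclass (aseq 0) (conn y)"

lemma KK_carr: "vcarr KK = vcarr OH \<inter> {\<xi>. kappa C f m \<xi> = vzero (underHM C f m)}"
  by (simp add: kerkappa_def subv_def)
lemma KK_add: "vadd KK = vadd OH" by (simp add: kerkappa_def subv_def)
lemma KK_smul: "vsmul KK = vsmul OH" by (simp add: kerkappa_def subv_def)

lemma conn_trunc_bdry: assumes y: "y \<in> Seqs" shows "\<exists>e. pm a (conn y) \<in> B a e"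
proof -
  obtain j where j: "aseq j \<le> a" using unb by blast
  obtain b' where b': "psum y j \<in> Below b'" using psum_bdd[OF y] by (auto simp: bdd_def)
  have "pm a (conn y) = pm a (pm (aseq j) (conn y))" using pm_pm[OF j] by simp
  also have "\<dots> = pm a (D (psum y j))" using trunc_conn[OF y] pm_pm[OF j] by simp
  also have "\<dots> = pm a (D (pm a (psum y j)))" using D_pm[OF Below_bdd[OF b']] by simp
  finally show ?thesis using pm_CM[OF b'] by (auto simp: bdries_iff)
qed

lemma ker_param_carr: assumes y: "y \<in> Seqs" shows "ker_param y \<in> vcarr KK"
proof -
  have z: "conn y \<in> gcycles (aseq 0)" by (rule conn_gcycles[OF y])
  have "kappa C f m (ker_param y) = vzero (underHM C f m)"
    unfolding ker_param_def kappa_zero_iff[OF z] using conn_trunc_bdry[OF y] by blast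
  then show ?thesis unfolding KK_carr ker_param_def using oclass_carr[OF z] by simp
qed

(* Every element of ker kappa is the class of a connecting cycle: represent it by a
   global cycle (lift_Lsys) and correct it by conn_surj. *)
lemma ker_param_surj: assumes xi: "\<xi> \<in> vcarr KK" shows "\<exists>y \<in> Seqs. ker_param y = \<xi>"
proof -
  have xiO: "\<xi> \<in> vcarr OH" and k0: "kappa C f m \<xi> = vzero (underHM C f m)" using xi KK_carr by auto
  obtain b x where bx: "\<xi> = dircls LS iL b x" "x \<in> vcarr (LS b)" using xiO OH_carr by blast
  obtain z where z: "z \<in> gcycles b" "cycle_fam b z = x" using lift_Lsys[OF bx(2)] by blast
  define b' where "b' = max b (aseq 0)"
  have z': "z \<in> gcycles b'" using gcycles_mono[OF z(1)] by (simp add: b'_def)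
  have xi_eq: "\<xi> = oclass b' z" using bx(1) z(2) oclass_mono[OF z(1)] by (simp add: oclass_def b'_def)
  have zB: "\<forall>a. \<exists>e. pm a z \<in> B a e" using k0 kappa_zero_iff[OF z'] xi_eq by simp
  obtain y E where y: "y \<in> Seqs" "\<forall>a. pm a (z - conn y) \<in> B a E" using conn_surj[OF z'] zB by blast
  have "pm a (conn y - z) \<in> B a E" for a
    using B_uminus[OF y(2)[rule_format, of a]] by (simp add: pm_diff)
  then have "oclass (aseq 0) (conn y) = oclass b' z"
    using oclass_eq[OF z' conn_gcycles[OF y(1)]] by blast
  then show ?thesis using y(1) xi_eq unfolding ker_param_def by blast
qed

lemma ker_param_im: "ker_param ` Seqs = vcarr KK"
  using ker_param_carr ker_param_surj by blast

lemma ker_param_add: "y \<in> Seqs \<Longrightarrow> y' \<in> Seqs \<Longrightarrow> vadd KK (ker_param y) (ker_param y') = ker_param (y + y')"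
  unfolding KK_add ker_param_def using oclass_add[OF conn_gcycles conn_gcycles] conn_add by simp

lemma ker_param_smul: "y \<in> Seqs \<Longrightarrow> vsmul KK k (ker_param y) = ker_param (sm k y)"
  unfolding KK_smul ker_param_def using oclass_smul[OF conn_gcycles] conn_smul by simp

lemma ker_param_fib: assumes y: "y \<in> Seqs" and y': "y' \<in> Seqs"
  shows "ker_param y = ker_param y' \<longleftrightarrow> Delta_equiv y y'"
proof -
  have d: "y - y' \<in> Seqs" by (rule Seqs_diff[OF y y'])
  have "ker_param y = ker_param y' \<longleftrightarrow> (\<exists>e. \<forall>a. pm a (conn (y - y')) \<in> B a e)"
    unfolding ker_param_def oclass_eq[OF conn_gcycles[OF y'] conn_gcycles[OF y]] conn_diff[OF y y'] ..
  also have "\<dots> \<longleftrightarrow> Delta_equiv y y'"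
  proof
    assume "\<exists>e. \<forall>a. pm a (conn (y - y')) \<in> B a e"
    then obtain e where "\<And>a. pm a (conn (y - y')) \<in> B a e" by blast
    then obtain g where g: "g \<in> Seqs" "\<forall>j. (y - y') j = Delta_ch g j" using conn_bdry_exact[OF d] by blast
    then show "Delta_equiv y y'" unfolding Delta_equiv_def by (intro bexI[of _ g]) (simp_all add: B_zero)
  next
    assume "Delta_equiv y y'"
    then show "\<exists>e. \<forall>a. pm a (conn (y - y')) \<in> B a e" using conn_bdry_of_Delta[OF d] unfolding Delta_equiv_def by blast
  qed
  finally show ?thesis .
qed

theorem kerkappa_iso_lim1: "vs_iso KK LIMv"
proof (rule vs_iso_by_parametrization[where P=Seqs and \<phi>a=ker_param and \<phi>b=lim1_param and pl="(+)" and sm=sm])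
  show "ker_param ` Seqs = vcarr KK" by (rule ker_param_im)
  show "lim1_param ` Seqs = vcarr LIMv" by (rule lim1_param_im)
  show "\<And>x y. x \<in> Seqs \<Longrightarrow> y \<in> Seqs \<Longrightarrow> x + y \<in> Seqs" by (rule Seqs_add)
  show "\<And>k x. x \<in> Seqs \<Longrightarrow> sm k x \<in> Seqs" by (rule Seqs_smul)
  show "\<And>x y. x \<in> Seqs \<Longrightarrow> y \<in> Seqs \<Longrightarrow> vadd KK (ker_param x) (ker_param y) = ker_param (x + y)" by (rule ker_param_add)
  show "\<And>x y. x \<in> Seqs \<Longrightarrow> y \<in> Seqs \<Longrightarrow> vadd LIMv (lim1_param x) (lim1_param y) = lim1_param (x + y)" by (rule lim1_param_add)
  show "\<And>k x. x \<in> Seqs \<Longrightarrow> vsmul KK k (ker_param x) = ker_param (sm k x)" by (rule ker_param_smul)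
  show "\<And>k x. x \<in> Seqs \<Longrightarrow> vsmul LIMv k (lim1_param x) = lim1_param (sm k x)" by (rule lim1_param_smul)
  show "\<And>x y. x \<in> Seqs \<Longrightarrow> y \<in> Seqs \<Longrightarrow> ker_param x = ker_param y \<longleftrightarrow> lim1_param x = lim1_param y"
    using ker_param_fib lim1_param_fib by simp
qed

end

theorem mainTheorem11:
  fixes C :: "'c set" and f :: "'c \<Rightarrow> real" and m :: "'c \<Rightarrow> 'c \<Rightarrow> 'k::field"
    and aseq :: "nat \<Rightarrow> real"
  assumes "floer_triple C f m"
    and "\<forall>j. aseq (Suc j) \<le> aseq j"
    and "filterlim aseq at_bot sequentially"
  shows "vs_iso (kerkappa C f m) (lim1 C f m aseq)"
proof -
  interpret floer_seq C f m aseq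
    by (rule floer_seq.intro[OF floer.intro[OF assms(1)]]) (unfold_locales, use assms in auto)
  show ?thesis by (rule kerkappa_iso_lim1)
qed

end
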